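(* Fix $\lambda>0$ and let $\phi:\mathbb R\to\mathbb R$ be Lipschitz with lower bound $l_\phi\ge0$ (i.e. $\phi\ge l_\phi$). Then there exists a solution $V^{\lambda,\phi}$ of $$(\mathcal L-r)v+f-\lambda e^{-(\phi-v)/\lambda}=0\quad\text{on }\mathbb R$$ such that $V^{\lambda,\phi}\in\mathcal C^{2,\alpha}_{loc}(\mathbb R)$ for every $\alpha\in(0,1)$ and $\limsup_{|x|\to\infty}|V^{\lambda,\phi}(x)/x|<\infty$.
   Context: Standing assumptions: $b,\sigma:\mathbb R\to\mathbb R$ with $|b(x)-b(y)|+|\sigma(x)-\sigma(y)|\le L|x-y|$ for some $L>0$, and $|\sigma(x)|\ge\sigma_0>0$; $f:\mathbb R\to[0,\infty)$, $f(0)=0$, $f$ is $L_f$-Lipschitz; $l:\mathbb R\to\mathbb R$ satisfies: there is $K>0$ with $\inf l=l(0)=K$ and $l(x)+l(y)\ge l(x+y)+K$, $l(\xi)\to\infty$ as $|\xi|\to\infty$, $l$ is $L_l$-Lipschitz; with $G=L+\frac12L^2$, the discount rate satisfies $0<r-G<L_f/L_l$. $\mathcal L v=bv'+\frac12\sigma^2v''$. $\mathcal C^{2,\alpha}_{loc}(\mathbb R)$ is the space of functions whose restriction to every bounded open set is $\mathcal C^2$ with $\alpha$-Hölder continuous second derivative. *)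

theory Defs
  imports "HOL-Analysis.Analysis"
begin

definition lipschitz_real :: "(real \<Rightarrow> real) \<Rightarrow> bool" where
  "lipschitz_real g \<longleftrightarrow> (\<exists>C. \<forall>x y. \<bar>g x - g y\<bar> \<le> C * \<bar>x - y\<bar>)"

text \<open>Membership in C^{2,alpha}_loc(R): twice differentiable everywhere, and the
  second derivative is alpha-Hoelder continuous on every bounded interval
  (hence on every bounded open set).\<close>
definition C2_alpha_loc :: "real \<Rightarrow> (real \<Rightarrow> real) \<Rightarrow> bool" where
  "C2_alpha_loc \<alpha> v \<longleftrightarrow>
     (\<exists>v' v''. (\<forall>x. (v has_real_derivative v' x) (at x)) \<and>
              (\<forall>x. (v' has_real_derivative v'' x) (at x)) \<and>
              (\<forall>a c. \<exists>C. \<forall>x\<in>{a..c}. \<forall>y\<in>{a..c}. \<bar>v'' x - v'' y\<bar> \<le> C * \<bar>x - y\<bar> powr \<alpha>))"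

definition linear_growth :: "(real \<Rightarrow> real) \<Rightarrow> bool" where
  "linear_growth v \<longleftrightarrow> (\<exists>M R. \<forall>x. \<bar>x\<bar> \<ge> R \<longrightarrow> \<bar>v x / x\<bar> \<le> M)"

end

theory Submission
  imports Defs
begin

text \<open>The barrier \<open>w(x) = A + B sqrt (1 + x\<^sup>2)\<close> is a strict supersolution and \<open>-w\<close> a strict
  subsolution once \<open>r > L\<close>. On \<open>[-R, R]\<close> the Dirichlet problem with boundary values \<open>w\<close> is
  solved by shooting: with the nonlinearity clipped to \<open>[-w, w]\<close> the initial value problem is
  globally Lipschitz, and the value at the right endpoint depends continuously and coercively on
  the initial slope. The maximum principle keeps the solution between \<open>-w\<close> and \<open>w\<close>, so the
  clipping is inactive, and comparison (the nonlinearity is increasing in \<open>v\<close>) makes these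
  solutions decrease as \<open>R\<close> grows. Their limit solves the equation on the whole line: in the
  form integrated twice with an integrating factor, the equation passes to the limit by dominated
  convergence. Finally, the equation expresses \<open>V''\<close> through locally Lipschitz data, which gives
  the local Hoelder bounds, and \<open>|V| \<le> w\<close> gives linear growth.\<close>

lemma abs_exp_diff_le: "\<bar>exp (u::real) - exp v\<bar> \<le> exp (max u v) * \<bar>u - v\<bar>"
proof -
  have *: "exp u - exp v \<le> exp u * (u - v)" if "v \<le> u" for u v :: real
  proof -
    have "exp u * (1 + (v - u)) \<le> exp u * exp (v - u)"
      using exp_ge_add_one_self[of "v - u"] by simp
    then show ?thesis by (simp add: algebra_simps flip: exp_add)
  qed
  show ?thesis
    using *[of v u] *[of u v] by (cases "v \<le> u") (auto simp: max_def abs_if algebra_simps)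
qed

lemma has_integral_exp_affine:
  fixes k :: real
  assumes "k > 0" "a \<le> u"
  shows "((\<lambda>t. exp (k * (t - a))) has_integral (exp (k * (u - a)) - 1) / k) {a..u}"
proof -
  have "((\<lambda>t. exp (k * (t - a))) has_integral exp (k * (u - a)) / k - exp (k * (a - a)) / k) {a..u}"
  proof (rule fundamental_theorem_of_calculus[OF assms(2)])
    fix x assume "x \<in> {a..u}"
    have "((\<lambda>t. exp (k * (t - a)) / k) has_real_derivative exp (k * (x - a)) * (k * 1) / k)
        (at x within {a..u})"
      by (auto intro!: derivative_eq_intros)
    then show "((\<lambda>t. exp (k * (t - a)) / k) has_vector_derivative exp (k * (x - a))) (at x within {a..u})"
      using assms(1) by (simp add: has_real_derivative_iff_has_vector_derivative)
  qed
  then show ?thesis by (simp add: diff_divide_distrib)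
qed

text \<open>Bielecki's weighted form of the Picard map: it acts on the rescaled unknown
  \<open>Z t = exp (-k (t - a)) Y t\<close>, and everything is frozen outside \<open>{a..c}\<close> by \<^const>\<open>clamp\<close>
  so that it maps bounded continuous functions to bounded continuous functions.\<close>
definition bielecki_picard_map ::
    "real \<Rightarrow> real \<Rightarrow> real \<Rightarrow> (real \<Rightarrow> 'b::banach \<Rightarrow> 'b) \<Rightarrow> 'b \<Rightarrow> (real \<Rightarrow>\<^sub>C 'b) \<Rightarrow> real \<Rightarrow>\<^sub>C 'b" where
  "bielecki_picard_map k a c F y0 Z = Bcontfun (ext_cont (\<lambda>u. exp (- k * (u - a)) *\<^sub>R
     (y0 + integral {a..u} (\<lambda>t. F t (exp (k * (t - a)) *\<^sub>R apply_bcontfun Z t)))) a c)"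

lemma bielecki_picard_map_apply:
  fixes F :: "real \<Rightarrow> 'b::banach \<Rightarrow> 'b"
  assumes contF: "\<And>Y. continuous_on {a..c} Y \<Longrightarrow> continuous_on {a..c} (\<lambda>t. F t (Y t))"
  shows "bielecki_picard_map k a c F y Z x = exp (- k * (clamp a c x - a)) *\<^sub>R
     (y + integral {a..clamp a c x} (\<lambda>t. F t (exp (k * (t - a)) *\<^sub>R apply_bcontfun Z t)))"
proof -
  define h where "h u = exp (- k * (u - a)) *\<^sub>R
     (y + integral {a..u} (\<lambda>t. F t (exp (k * (t - a)) *\<^sub>R apply_bcontfun Z t)))" for u
  have "continuous_on {a..c} (\<lambda>t. F t (exp (k * (t - a)) *\<^sub>R apply_bcontfun Z t))"
    by (rule contF) (intro continuous_intros continuous_on_subset[OF continuous_on_apply_bcontfun], auto)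
  then have ch: "continuous_on (cbox a c) h"
    unfolding h_def cbox_interval
    by (intro continuous_intros indefinite_integral_continuous_1 integrable_continuous_real)
  then have "bounded (h ` cbox a c)"
    by (intro compact_imp_bounded compact_continuous_image compact_cbox)
  then have "ext_cont h a c \<in> bcontfun"
    unfolding bcontfun_def using continuous_on_ext_cont[OF ch] clamp_bounded[of h a c]
    by (auto simp: ext_cont_def)
  then show ?thesis
    unfolding bielecki_picard_map_def h_def[symmetric] by (simp add: Bcontfun_inverse ext_cont_def)
qed

lemma bielecki_picard_map_contraction:
  fixes F :: "real \<Rightarrow> 'b::banach \<Rightarrow> 'b"
  assumes ac: "a \<le> c" and K: "K > 0"
    and contF: "\<And>Y. continuous_on {a..c} Y \<Longrightarrow> continuous_on {a..c} (\<lambda>t. F t (Y t))"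
    and lip: "\<And>t y z. t \<in> {a..c} \<Longrightarrow> norm (F t y - F t z) \<le> K * norm (y - z)"
  shows "dist (bielecki_picard_map (2 * K) a c F y0 Z1) (bielecki_picard_map (2 * K) a c F y0 Z2)
    \<le> 1/2 * dist Z1 Z2"
proof (rule dist_bound)
  fix x
  define k where "k = 2 * K"
  have k: "k > 0" using K by (simp add: k_def)
  define e where "e t = exp (k * (t - a))" for t
  define G where "G Z t = F t (e t *\<^sub>R apply_bcontfun Z t)" for Z :: "real \<Rightarrow>\<^sub>C 'b" and t
  define u where "u = clamp a c x"
  have u: "u \<in> {a..c}" using clamp_in_interval[of a c x] ac by (simp add: u_def)
  have intG: "G Z integrable_on {a..u}" for Z
    unfolding G_def e_def using u
    by (intro integrable_continuous_real continuous_on_subset[OF contF])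
      (auto intro!: continuous_intros continuous_on_subset[OF continuous_on_apply_bcontfun])
  define d where "d = dist Z1 Z2"
  have "norm (G Z1 t - G Z2 t) \<le> K * d * e t" if "t \<in> {a..u}" for t
  proof -
    have "norm (G Z1 t - G Z2 t) \<le> K * norm (e t *\<^sub>R apply_bcontfun Z1 t - e t *\<^sub>R apply_bcontfun Z2 t)"
      unfolding G_def using lip that u by auto
    also have "\<dots> = K * (e t * dist (apply_bcontfun Z1 t) (apply_bcontfun Z2 t))"
      by (simp add: dist_norm e_def flip: scaleR_diff_right)
    also have "\<dots> \<le> K * (e t * d)"
      using K dist_bounded[of Z1 t Z2] unfolding d_def e_def by (intro mult_left_mono) auto
    finally show ?thesis by (simp add: algebra_simps)
  qed
  then have "norm (integral {a..u} (\<lambda>t. G Z1 t - G Z2 t)) \<le> integral {a..u} (\<lambda>t. K * d * e t)"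
    using u unfolding e_def
    by (intro integral_norm_bound_integral integrable_diff intG integrable_continuous_real
        continuous_intros) auto
  also have "\<dots> = K * d * ((e u - 1) / k)"
    using has_integral_exp_affine[OF k, of a u] u unfolding e_def by (simp add: integral_unique)
  finally have I: "norm (integral {a..u} (G Z1) - integral {a..u} (G Z2)) \<le> K * d * ((e u - 1) / k)"
    using intG by (simp add: integral_diff)
  have "dist (bielecki_picard_map k a c F y0 Z1 x) (bielecki_picard_map k a c F y0 Z2 x)
      = exp (- k * (u - a)) * norm (integral {a..u} (G Z1) - integral {a..u} (G Z2))"
    using bielecki_picard_map_apply[where F = F and k = k and y = y0 and Z = Z1 and x = x, OF contF] bielecki_picard_map_apply[where F = F and k = k and y = y0 and Z = Z2 and x = x, OF contF]
    unfolding u_def[symmetric] G_def e_def dist_norm by (simp flip: scaleR_diff_right)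
  also have "\<dots> \<le> exp (- k * (u - a)) * (K * d * ((e u - 1) / k))"
    by (intro mult_left_mono I) auto
  also have "\<dots> = K * d * (1 - exp (- k * (u - a))) / k"
    unfolding e_def using k by (simp add: field_simps flip: exp_add)
  also have "\<dots> \<le> K * d / k"
    using K k d_def by (intro divide_right_mono) (auto simp: mult_left_le)
  also have "\<dots> = 1/2 * dist Z1 Z2" using K by (simp add: k_def d_def)
  finally show "dist (bielecki_picard_map (2 * K) a c F y0 Z1 x) (bielecki_picard_map (2 * K) a c F y0 Z2 x)
      \<le> 1/2 * dist Z1 Z2"
    unfolding k_def .
qed

lemma bielecki_picard_map_initial_value:
  fixes F :: "real \<Rightarrow> 'b::banach \<Rightarrow> 'b"
  assumes ac: "a \<le> c" and k: "k \<ge> 0"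
    and contF: "\<And>Y. continuous_on {a..c} Y \<Longrightarrow> continuous_on {a..c} (\<lambda>t. F t (Y t))"
  shows "dist (bielecki_picard_map k a c F y Z) (bielecki_picard_map k a c F z Z) \<le> norm (y - z)"
proof (rule dist_bound)
  fix x
  have "dist (bielecki_picard_map k a c F y Z x) (bielecki_picard_map k a c F z Z x)
      = exp (- k * (clamp a c x - a)) * norm (y - z)"
    using bielecki_picard_map_apply[where F = F and k = k and y = y and Z = Z and x = x, OF contF] bielecki_picard_map_apply[where F = F and k = k and y = z and Z = Z and x = x, OF contF]
    unfolding dist_norm by (simp flip: scaleR_diff_right)
  also have "\<dots> \<le> norm (y - z)"
    using clamp_in_interval[of a c x] ac k by (auto intro!: mult_left_le_one_le)
  finally show "dist (bielecki_picard_map k a c F y Z x) (bielecki_picard_map k a c F z Z x) \<le> norm (y - z)" .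
qed

lemma picard_lindeloef_Icc:
  fixes F :: "real \<Rightarrow> 'b::banach \<Rightarrow> 'b"
  assumes ac: "a \<le> c" and K: "K > 0"
    and contF: "\<And>Y. continuous_on {a..c} Y \<Longrightarrow> continuous_on {a..c} (\<lambda>t. F t (Y t))"
    and lip: "\<And>t y z. t \<in> {a..c} \<Longrightarrow> norm (F t y - F t z) \<le> K * norm (y - z)"
  obtains Sol where "\<And>y0. continuous_on {a..c} (Sol y0)"
    "\<And>y0 x. x \<in> {a..c} \<Longrightarrow> Sol y0 x = y0 + integral {a..x} (\<lambda>t. F t (Sol y0 t))"
    "\<And>y0 y1 x. x \<in> {a..c} \<Longrightarrow>
        norm (Sol y0 x - Sol y1 x) \<le> 2 * exp (2 * K * (c - a)) * norm (y0 - y1)"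
proof -
  define P where "P = bielecki_picard_map (2 * K) a c F"
  have contr: "dist (P y0 Z1) (P y0 Z2) \<le> 1/2 * dist Z1 Z2" for y0 Z1 Z2
    unfolding P_def by (rule bielecki_picard_map_contraction[OF ac K contF lip])
  have "\<exists>!Z. P y0 Z = Z" for y0
    using Banach_fix[of UNIV "1/2" "P y0"] contr complete_UNIV by auto
  then obtain Zf where Zf: "\<And>y0. P y0 (Zf y0) = Zf y0"
    by metis
  define Sol where "Sol y0 t = exp (2 * K * (t - a)) *\<^sub>R apply_bcontfun (Zf y0) t" for y0 t
  show ?thesis
  proof
    show "continuous_on {a..c} (Sol y0)" for y0
      unfolding Sol_def by (intro continuous_intros continuous_on_subset[OF continuous_on_apply_bcontfun]) auto
  next
    fix y0 x assume x: "x \<in> {a..c}"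
    have "apply_bcontfun (Zf y0) x = apply_bcontfun (P y0 (Zf y0)) x"
      using Zf[of y0] by simp
    also have "\<dots> = exp (- 2 * K * (x - a)) *\<^sub>R (y0 + integral {a..x} (\<lambda>t. F t (Sol y0 t)))"
      using bielecki_picard_map_apply[where F = F and k = "2 * K" and y = y0 and Z = "Zf y0" and x = x, OF contF] x
      unfolding P_def Sol_def by simp
    finally show "Sol y0 x = y0 + integral {a..x} (\<lambda>t. F t (Sol y0 t))"
      unfolding Sol_def by (simp flip: exp_add)
  next
    fix y0 y1 x assume x: "x \<in> {a..c}"
    define d where "d = dist (Zf y0) (Zf y1)"
    have "d \<le> 1/2 * d + norm (y0 - y1)"
      using dist_triangle[of "P y0 (Zf y0)" "P y1 (Zf y1)" "P y0 (Zf y1)"] contr[of y0 "Zf y0" "Zf y1"]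
        bielecki_picard_map_initial_value[where k = "2 * K" and F = F and y = y0 and z = y1 and Z = "Zf y1", OF ac _ contF] K
      unfolding d_def Zf P_def by (simp add: Zf[unfolded P_def])
    then have dle: "d \<le> 2 * norm (y0 - y1)" by simp
    have "norm (Sol y0 x - Sol y1 x) = exp (2 * K * (x - a)) * dist (Zf y0 x) (Zf y1 x)"
      unfolding Sol_def dist_norm by (simp flip: scaleR_diff_right)
    also have "\<dots> \<le> exp (2 * K * (c - a)) * (2 * norm (y0 - y1))"
      using x K dist_bounded[of "Zf y0" x "Zf y1"] dle unfolding d_def by (intro mult_mono) auto
    finally show "norm (Sol y0 x - Sol y1 x) \<le> 2 * exp (2 * K * (c - a)) * norm (y0 - y1)" by simp
  qed
qed

lemma max_principle_Icc:
  fixes D D1 D2 :: "real \<Rightarrow> real"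
  assumes ac: "a \<le> c" and cont: "continuous_on {a..c} D"
    and d1: "\<And>x. x \<in> {a<..<c} \<Longrightarrow> (D has_real_derivative D1 x) (at x)"
    and d2: "\<And>x. x \<in> {a<..<c} \<Longrightarrow> (D1 has_real_derivative D2 x) (at x)"
    and Da: "D a \<le> 0" and Dc: "D c \<le> 0"
    and convex_at_critical: "\<And>x. x \<in> {a<..<c} \<Longrightarrow> D x > 0 \<Longrightarrow> D1 x = 0 \<Longrightarrow> D2 x > 0"
  shows "\<forall>x\<in>{a..c}. D x \<le> 0"
proof (rule ccontr)
  assume "\<not> (\<forall>x\<in>{a..c}. D x \<le> 0)"
  then obtain x1 where x1: "x1 \<in> {a..c}" "D x1 > 0" by force
  obtain x0 where x0: "x0 \<in> {a..c}" "\<And>y. y \<in> {a..c} \<Longrightarrow> D y \<le> D x0"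
    using continuous_attains_sup[OF compact_Icc _ cont] ac by fastforce
  have pos: "D x0 > 0" using x0(2)[OF x1(1)] x1(2) by simp
  then have x0i: "x0 \<in> {a<..<c}" using x0(1) Da Dc by (cases "x0 = a \<or> x0 = c") auto
  define d where "d = min (x0 - a) (c - x0)"
  have d: "d > 0" using x0i by (auto simp: d_def)
  have "D1 x0 = 0"
    by (rule DERIV_local_max[OF d1[OF x0i] d]) (auto simp: d_def intro!: x0(2))
  then have "D2 x0 > 0" using convex_at_critical[OF x0i pos] by simp
  then obtain e where e: "e > 0" "\<And>h. h > 0 \<Longrightarrow> h < e \<Longrightarrow> D1 x0 < D1 (x0 + h)"
    using DERIV_pos_inc_right[OF d2[OF x0i]] by blast
  define h0 where "h0 = min e d / 2"
  have h0: "h0 > 0" "h0 < e" "h0 < d" using e d by (auto simp: h0_def)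
  have "DERIV D x :> D1 x" if "x0 \<le> x" "x \<le> x0 + h0" for x
    using that x0i h0 by (intro d1) (auto simp: d_def)
  then obtain z where z: "x0 < z" "z < x0 + h0" "D (x0 + h0) - D x0 = h0 * D1 z"
    using MVT2[of x0 "x0 + h0" D D1] h0 by auto
  have "D1 z > 0" using e(2)[of "z - x0"] z h0 \<open>D1 x0 = 0\<close> by auto
  then have "D (x0 + h0) > D x0" using z(3) h0(1) by (simp add: algebra_simps)
  moreover have "x0 + h0 \<in> {a..c}" using h0 x0i unfolding d_def by auto
  ultimately show False using x0(2) by fastforce
qed

lemma integral_eq_of_derivative:
  fixes F f :: "real \<Rightarrow> real"
  assumes "a \<le> x" "\<And>t. t \<in> {a..x} \<Longrightarrow> (F has_real_derivative f t) (at t within {a..x})"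
  shows "F x = F a + integral {a..x} f"
proof -
  have "(f has_integral (F x - F a)) {a..x}"
    using assms by (intro fundamental_theorem_of_calculus)
      (auto simp: has_real_derivative_iff_has_vector_derivative)
  then show ?thesis by (simp add: integral_unique)
qed

lemma has_real_derivative_indefinite_integral:
  fixes g G :: "real \<Rightarrow> real"
  assumes g: "continuous_on {a..c} g" and x: "x \<in> {a<..<c}"
    and G: "\<And>y. y \<in> {a..c} \<Longrightarrow> G y = k + integral {a..y} g"
  shows "(G has_real_derivative g x) (at x)"
proof -
  have "((\<lambda>u. integral {a..u} g) has_vector_derivative g x) (at x within {a..c})"
    using x by (intro integral_has_vector_derivative[OF g]) auto
  then have "((\<lambda>u. k + integral {a..u} g) has_real_derivative g x) (at x)"
    using at_within_interior[of x "{a..c}"] x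
    by (auto intro!: derivative_eq_intros simp: has_real_derivative_iff_has_vector_derivative)
  then show ?thesis
    by (rule has_field_derivative_transform_within_open[of _ _ _ "{a<..<c}"]) (use x G in auto)
qed

lemma continuous_on_Icc_abs_bound:
  fixes g :: "real \<Rightarrow> real"
  assumes "continuous_on {a..c} g"
  obtains M where "M \<ge> 0" "\<And>t. t \<in> {a..c} \<Longrightarrow> \<bar>g t\<bar> \<le> M"
proof -
  have "bounded (g ` {a..c})" by (intro compact_imp_bounded compact_continuous_image assms) auto
  then obtain M where "\<forall>t\<in>{a..c}. \<bar>g t\<bar> \<le> M" by (auto simp: bounded_iff)
  then show ?thesis using that[of "max M 0"] by fastforce
qed

lemma glue_local_derivatives:
  fixes V :: "real \<Rightarrow> real" and E :: "real \<Rightarrow> real \<Rightarrow> real \<Rightarrow> bool"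
  assumes local: "\<And>n::nat. \<exists>D1 D2. \<forall>x\<in>{- real n<..<real n}.
      (V has_real_derivative D1 x) (at x) \<and> (D1 has_real_derivative D2 x) (at x) \<and> E x (D1 x) (D2 x)"
  obtains V' V'' where "\<And>x. (V has_real_derivative V' x) (at x)"
    "\<And>x. (V' has_real_derivative V'' x) (at x)" "\<And>x. E x (V' x) (V'' x)"
proof -
  obtain D1 D2 where D: "\<And>n x. x \<in> {- real n<..<real n} \<Longrightarrow> (V has_real_derivative D1 n x) (at x) \<and>
      (D1 n has_real_derivative D2 n x) (at x) \<and> E x (D1 n x) (D2 n x)"
    using local by metis
  define N where "N x = Suc (nat \<lceil>\<bar>x\<bar>\<rceil>)" for x :: real
  have inN: "x \<in> {- real (N x)<..<real (N x)}" for x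
    unfolding N_def by auto linarith+
  show ?thesis
  proof
    fix x
    show "(V has_real_derivative D1 (N x) x) (at x)" "E x (D1 (N x) x) (D2 (N x) x)"
      using D[OF inN] by auto
    have "(D1 (N x) has_real_derivative D2 (N x) x) (at x)" using D[OF inN] by blast
    then show "((\<lambda>x. D1 (N x) x) has_real_derivative D2 (N x) x) (at x)"
    proof (rule has_field_derivative_transform_within_open[OF _ _ inN])
      fix y assume y: "y \<in> {- real (N x)<..<real (N x)}"
      show "D1 (N x) y = D1 (N y) y"
        using D[OF y] D[OF inN[of y]] by (blast intro: DERIV_unique)
    qed simp
  qed
qed

lemma abs_fst_le_norm: "\<bar>fst p\<bar> \<le> norm (p :: real \<times> real)"
  using norm_fst_le[of "fst p" "snd p"] by simp

lemma abs_snd_le_norm: "\<bar>snd p\<bar> \<le> norm (p :: real \<times> real)"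
  using norm_snd_le[of "snd p" "fst p"] by simp

lemma quotient_by_integrating_factor:
  fixes W p :: "real \<Rightarrow> real"
  assumes W: "(W has_real_derivative 2 * p x / s2 * g) (at x)"
    and p: "(p has_real_derivative 2 * bb / s2 * p x) (at x)" and "p x \<noteq> 0" "s2 \<noteq> 0"
  shows "((\<lambda>y. W y / p y) has_real_derivative 2 / s2 * g - 2 * bb / s2 * (W x / p x)) (at x)"
    and "s2 / 2 * (2 / s2 * g - 2 * bb / s2 * (W x / p x)) + bb * (W x / p x) = g"
proof -
  have "((\<lambda>y. W y / p y) has_real_derivative
      (2 * p x / s2 * g * p x - W x * (2 * bb / s2 * p x)) / (p x * p x)) (at x)"
    using assms by (intro DERIV_divide) auto
  moreover have "(2 * p x / s2 * g * p x - W x * (2 * bb / s2 * p x)) / (p x * p x)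
      = 2 / s2 * g - 2 * bb / s2 * (W x / p x)"
    using assms(3,4) by (simp add: field_simps)
  ultimately show "((\<lambda>y. W y / p y) has_real_derivative 2 / s2 * g - 2 * bb / s2 * (W x / p x)) (at x)"
    by simp
  show "s2 / 2 * (2 / s2 * g - 2 * bb / s2 * (W x / p x)) + bb * (W x / p x) = g"
    using assms(4) by (simp add: field_simps)
qed
section \<open>Local Lipschitz continuity on the line\<close>

definition locally_lipschitz :: "(real \<Rightarrow> real) \<Rightarrow> bool" where
  "locally_lipschitz g \<longleftrightarrow> (\<forall>a c. \<exists>C. C-lipschitz_on {a..c} g)"

lemma lipschitz_on_of_abs_bound:
  assumes "\<And>x y. \<bar>g x - g y\<bar> \<le> C * \<bar>x - y\<bar>"
  shows "(max C 0)-lipschitz_on S g"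
proof (rule lipschitz_onI)
  fix x y
  have "C * \<bar>x - y\<bar> \<le> max C 0 * \<bar>x - y\<bar>" by (intro mult_right_mono) auto
  then show "dist (g x) (g y) \<le> max C 0 * dist x y"
    using assms[of x y] by (simp add: dist_real_def)
qed simp

lemma lipschitz_imp_locally_lipschitz:
  "(\<And>x y. \<bar>g x - g y\<bar> \<le> C * \<bar>x - y\<bar>) \<Longrightarrow> locally_lipschitz g"
  unfolding locally_lipschitz_def by (blast intro: lipschitz_on_of_abs_bound)

lemma locally_lipschitz_bounded:
  assumes "locally_lipschitz g"
  obtains M where "M \<ge> 0" "\<And>x. x \<in> {a..c} \<Longrightarrow> \<bar>g x\<bar> \<le> M"
proof -
  obtain C where "C-lipschitz_on {a..c} g" using assms unfolding locally_lipschitz_def by blast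
  then show ?thesis
    using that by (blast intro: continuous_on_Icc_abs_bound lipschitz_on_continuous_on)
qed

lemma locally_lipschitz_const: "locally_lipschitz (\<lambda>x. k)"
  unfolding locally_lipschitz_def by (blast intro: lipschitz_on_constant)

lemma locally_lipschitz_add:
  "locally_lipschitz f \<Longrightarrow> locally_lipschitz g \<Longrightarrow> locally_lipschitz (\<lambda>x. f x + g x)"
  unfolding locally_lipschitz_def by (blast intro: lipschitz_on_add)

lemma locally_lipschitz_diff:
  "locally_lipschitz f \<Longrightarrow> locally_lipschitz g \<Longrightarrow> locally_lipschitz (\<lambda>x. f x - g x)"
  unfolding locally_lipschitz_def by (blast intro: lipschitz_on_diff)

lemma locally_lipschitz_mult:
  assumes "locally_lipschitz f" "locally_lipschitz g"
  shows "locally_lipschitz (\<lambda>x. f x * g x)"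
  unfolding locally_lipschitz_def
proof (intro allI)
  fix a c
  obtain C1 C2 where C: "C1-lipschitz_on {a..c} f" "C2-lipschitz_on {a..c} g"
    using assms unfolding locally_lipschitz_def by blast
  obtain M1 M2 where M: "M1 \<ge> 0" "\<And>x. x \<in> {a..c} \<Longrightarrow> \<bar>f x\<bar> \<le> M1"
    "M2 \<ge> 0" "\<And>x. x \<in> {a..c} \<Longrightarrow> \<bar>g x\<bar> \<le> M2"
    using locally_lipschitz_bounded assms by metis
  have "(M1 * C2 + M2 * C1)-lipschitz_on {a..c} (\<lambda>x. f x * g x)"
  proof (rule lipschitz_onI)
    fix x y assume x: "x \<in> {a..c}" and y: "y \<in> {a..c}"
    have "\<bar>f x * g x - f y * g y\<bar> = \<bar>f x * (g x - g y) + g y * (f x - f y)\<bar>"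
      by (simp add: algebra_simps)
    also have "\<dots> \<le> \<bar>f x\<bar> * \<bar>g x - g y\<bar> + \<bar>g y\<bar> * \<bar>f x - f y\<bar>"
      by (simp add: abs_mult[symmetric] abs_triangle_ineq)
    also have "\<dots> \<le> M1 * (C2 * \<bar>x - y\<bar>) + M2 * (C1 * \<bar>x - y\<bar>)"
      using x y M C[THEN lipschitz_onD, of x y]
      by (intro add_mono mult_mono) (auto simp: dist_real_def)
    finally show "dist (f x * g x) (f y * g y) \<le> (M1 * C2 + M2 * C1) * dist x y"
      by (simp add: dist_real_def algebra_simps)
  qed (use M C[THEN lipschitz_on_nonneg] in simp)
  then show "\<exists>C. C-lipschitz_on {a..c} (\<lambda>x. f x * g x)" ..
qed

lemma locally_lipschitz_exp:
  assumes "locally_lipschitz g"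
  shows "locally_lipschitz (\<lambda>x. exp (g x))"
  unfolding locally_lipschitz_def
proof (intro allI)
  fix a c
  obtain C where C: "C-lipschitz_on {a..c} g" using assms unfolding locally_lipschitz_def by blast
  obtain M where M: "\<And>x. x \<in> {a..c} \<Longrightarrow> \<bar>g x\<bar> \<le> M" using locally_lipschitz_bounded assms by metis
  have "(exp M * C)-lipschitz_on {a..c} (\<lambda>x. exp (g x))"
  proof (rule lipschitz_onI)
    fix x y assume x: "x \<in> {a..c}" and y: "y \<in> {a..c}"
    have "\<bar>exp (g x) - exp (g y)\<bar> \<le> exp (max (g x) (g y)) * \<bar>g x - g y\<bar>"
      by (rule abs_exp_diff_le)
    also have "\<dots> \<le> exp M * (C * \<bar>x - y\<bar>)"
      using x y M C[THEN lipschitz_onD, of x y] by (intro mult_mono) (auto simp: abs_le_iff dist_real_def)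
    finally show "dist (exp (g x)) (exp (g y)) \<le> exp M * C * dist x y" by (simp add: dist_real_def)
  qed (use C[THEN lipschitz_on_nonneg] in simp)
  then show "\<exists>C. C-lipschitz_on {a..c} (\<lambda>x. exp (g x))" ..
qed

lemma locally_lipschitz_inverse:
  assumes "locally_lipschitz g" "e > 0" "\<And>x. g x \<ge> e"
  shows "locally_lipschitz (\<lambda>x. 1 / g x)"
  unfolding locally_lipschitz_def
proof (intro allI)
  fix a c
  obtain C where C: "C-lipschitz_on {a..c} g" using assms unfolding locally_lipschitz_def by blast
  have "(C / (e * e))-lipschitz_on {a..c} (\<lambda>x. 1 / g x)"
  proof (rule lipschitz_onI)
    fix x y assume x: "x \<in> {a..c}" and y: "y \<in> {a..c}"
    have ge: "g x \<ge> e" "g y \<ge> e" using assms by auto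
    then have "\<bar>1 / g x - 1 / g y\<bar> = \<bar>g x - g y\<bar> / (g x * g y)"
      using assms(2) by (simp add: field_simps abs_minus_commute)
    also have "\<dots> \<le> \<bar>g x - g y\<bar> / (e * e)"
      using ge assms(2) by (intro divide_left_mono mult_mono) auto
    also have "\<dots> \<le> C * \<bar>x - y\<bar> / (e * e)"
      using C[THEN lipschitz_onD, of x y] x y by (intro divide_right_mono) (auto simp: dist_real_def)
    finally show "dist (1 / g x) (1 / g y) \<le> C / (e * e) * dist x y" by (simp add: dist_real_def)
  qed (use C[THEN lipschitz_on_nonneg] assms(2) in simp)
  then show "\<exists>C. C-lipschitz_on {a..c} (\<lambda>x. 1 / g x)" ..
qed

lemma locally_lipschitz_of_continuous_deriv:
  assumes "\<And>x. (g has_real_derivative g' x) (at x)" "continuous_on UNIV g'"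
  shows "locally_lipschitz g"
  unfolding locally_lipschitz_def
proof (intro allI)
  fix a c
  obtain M where M: "M \<ge> 0" "\<And>x. x \<in> {a..c} \<Longrightarrow> \<bar>g' x\<bar> \<le> M"
    using continuous_on_Icc_abs_bound[OF continuous_on_subset[OF assms(2)]] by blast
  have "M-lipschitz_on {a..c} g"
  proof (rule bounded_derivative_imp_lipschitz)
    show "(g has_derivative (*) (g' x)) (at x within {a..c})" for x
      using assms(1)[of x] by (simp add: has_field_derivative_def has_derivative_at_withinI)
    have "onorm ((*) (g' x)) = \<bar>g' x\<bar>" for x
    proof -
      have "(*) (g' x) = (\<lambda>h. g' x *\<^sub>R h)" by auto
      then show ?thesis
        by (metis onorm_scaleR[OF bounded_linear_ident] onorm_id mult_1_right)
    qed
    then show "onorm ((*) (g' x)) \<le> M" if "x \<in> {a..c}" for x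
      using M that by fastforce
  qed (use M in auto)
  then show "\<exists>C. C-lipschitz_on {a..c} g" ..
qed

lemma locally_lipschitz_imp_holder:
  assumes "locally_lipschitz g" "0 < \<alpha>" "\<alpha> < 1"
  shows "\<exists>C. \<forall>x\<in>{a..c}. \<forall>y\<in>{a..c}. \<bar>g x - g y\<bar> \<le> C * \<bar>x - y\<bar> powr \<alpha>"
proof -
  obtain C where C: "C-lipschitz_on {a..c} g" using assms unfolding locally_lipschitz_def by blast
  have "\<bar>g x - g y\<bar> \<le> (C * \<bar>c - a\<bar> powr (1 - \<alpha>)) * \<bar>x - y\<bar> powr \<alpha>"
    if x: "x \<in> {a..c}" and y: "y \<in> {a..c}" for x y
  proof (cases "x = y")
    case False
    have "\<bar>g x - g y\<bar> \<le> C * \<bar>x - y\<bar>"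
      using C[THEN lipschitz_onD, OF x y] by (simp add: dist_real_def)
    also have "\<bar>x - y\<bar> = \<bar>x - y\<bar> powr (1 - \<alpha>) * \<bar>x - y\<bar> powr \<alpha>"
      using False by (simp flip: powr_add)
    also have "\<dots> \<le> \<bar>c - a\<bar> powr (1 - \<alpha>) * \<bar>x - y\<bar> powr \<alpha>"
      using x y assms by (intro mult_right_mono powr_mono2) auto
    finally show ?thesis
      using C[THEN lipschitz_on_nonneg] by (simp add: mult.assoc mult_left_mono)
  qed simp
  then show ?thesis by blast
qed

section \<open>The equation and its barrier\<close>

locale hjb_ode =
  fixes b \<sigma> f \<phi> :: "real \<Rightarrow> real" and L sigma0 Lf r lam :: real
  assumes L_pos: "L > 0"
    and lip_b_sigma: "\<forall>x y. \<bar>b x - b y\<bar> + \<bar>\<sigma> x - \<sigma> y\<bar> \<le> L * \<bar>x - y\<bar>"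
    and sigma0: "sigma0 > 0" "\<forall>x. \<bar>\<sigma> x\<bar> \<ge> sigma0"
    and f_nonneg: "\<forall>x. f x \<ge> 0" and f0: "f 0 = 0"
    and f_lip: "\<forall>x y. \<bar>f x - f y\<bar> \<le> Lf * \<bar>x - y\<bar>"
    and r_gt_L: "r > L" and lam_pos: "lam > 0"
    and phi_lip: "lipschitz_real \<phi>"
    and phi_nonneg: "\<forall>x. \<phi> x \<ge> 0"
begin

lemma r_pos: "r > 0"
  using r_gt_L L_pos by linarith

lemma b_lip: "\<bar>b x - b y\<bar> \<le> L * \<bar>x - y\<bar>"
  using lip_b_sigma[rule_format, of x y] abs_ge_zero[of "\<sigma> x - \<sigma> y"] by linarith

lemma sigma_lip: "\<bar>\<sigma> x - \<sigma> y\<bar> \<le> L * \<bar>x - y\<bar>"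
  using lip_b_sigma[rule_format, of x y] abs_ge_zero[of "b x - b y"] by linarith

lemma phi_lip_const: obtains C where "\<And>x y. \<bar>\<phi> x - \<phi> y\<bar> \<le> C * \<bar>x - y\<bar>"
  using phi_lip unfolding lipschitz_real_def by blast

lemma
  shows continuous_on_b: "continuous_on S b"
    and continuous_on_sigma: "continuous_on S \<sigma>"
    and continuous_on_f: "continuous_on S f"
    and continuous_on_phi: "continuous_on S \<phi>"
  by (metis lipschitz_on_continuous_on lipschitz_on_of_abs_bound b_lip sigma_lip f_lip phi_lip_const)+

lemma
  shows locally_lipschitz_b: "locally_lipschitz b"
    and locally_lipschitz_sigma: "locally_lipschitz \<sigma>"
    and locally_lipschitz_f: "locally_lipschitz f"
    and locally_lipschitz_phi: "locally_lipschitz \<phi>"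
  by (metis lipschitz_imp_locally_lipschitz b_lip sigma_lip f_lip phi_lip_const)+

lemma sigma_nonzero: "\<sigma> x \<noteq> 0"
  using sigma0 by (metis abs_zero not_less)

lemma sigma2_pos: "(\<sigma> x)\<^sup>2 > 0"
  using sigma_nonzero by simp

lemma sigma2_ge: "(\<sigma> x)\<^sup>2 \<ge> sigma0\<^sup>2"
  using sigma0 by (metis abs_ge_zero less_le power2_abs power_mono)

lemma f_le: "f x \<le> \<bar>Lf\<bar> * \<bar>x\<bar>"
proof -
  have "\<bar>f x - f 0\<bar> \<le> \<bar>Lf\<bar> * \<bar>x - 0\<bar>"
    using f_lip[rule_format, of x 0] by (metis abs_ge_self abs_ge_zero mult_right_mono order_trans)
  then show ?thesis using f0 by simp
qed

definition H :: "real \<Rightarrow> real \<Rightarrow> real" where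
  "H x v = r * v - f x + lam * exp ((v - \<phi> x) / lam)"

lemma H_strict_mono: "u < v \<Longrightarrow> H x u < H x v"
  unfolding H_def using r_pos lam_pos by (simp add: add_less_le_mono divide_right_mono)

lemma continuous_on_H: "continuous_on S V \<Longrightarrow> continuous_on S (\<lambda>t. H t (V t))"
  unfolding H_def using lam_pos by (intro continuous_intros continuous_on_f continuous_on_phi) auto

definition bracket :: "real \<Rightarrow> real" where
  "bracket x = sqrt (1 + x\<^sup>2)"

lemma bracket_ge_1: "bracket x \<ge> 1"
  unfolding bracket_def by simp

lemma bracket_ge_abs: "bracket x \<ge> \<bar>x\<bar>"
  unfolding bracket_def by (metis abs_ge_zero le_add_same_cancel2 real_sqrt_abs real_sqrt_le_mono zero_le_one)

lemma bracket_le: "bracket x \<le> 1 + \<bar>x\<bar>"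
  unfolding bracket_def by (rule real_le_lsqrt) (simp_all add: power2_sum)

lemma bracket_deriv: "(bracket has_real_derivative x / bracket x) (at x)"
proof -
  have "DERIV sqrt (1 + x\<^sup>2) :> inverse (sqrt (1 + x\<^sup>2)) / 2"
    by (rule DERIV_real_sqrt) (simp add: add_pos_nonneg)
  moreover have "((\<lambda>x. 1 + x\<^sup>2) has_real_derivative 2 * x) (at x)"
    by (auto intro!: derivative_eq_intros)
  ultimately have "(bracket has_real_derivative inverse (sqrt (1 + x\<^sup>2)) / 2 * (2 * x)) (at x)"
    unfolding bracket_def by (rule DERIV_chain2)
  moreover have "inverse (sqrt (1 + x\<^sup>2)) / 2 * (2 * x) = x / bracket x"
    by (simp add: bracket_def inverse_eq_divide)
  ultimately show ?thesis by simp
qed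

text \<open>The barrier \<open>A + B \<langle>x\<rangle>\<close>: its slope satisfies \<open>r B = L B + |Lf| + 1\<close>, so that the
  zeroth order term beats both the linear growth of \<open>f\<close> and the first and second order terms,
  which grow at most like \<open>L B \<langle>x\<rangle>\<close> by the Lipschitz bounds on \<open>b\<close> and \<open>\<sigma>\<close>.\<close>
definition barrier_slope :: real where
  "barrier_slope = (\<bar>Lf\<bar> + 1) / (r - L)"

definition drift_const :: real where
  "drift_const = \<bar>b 0\<bar> + (\<bar>\<sigma> 0\<bar> + L)\<^sup>2 / 2"

definition barrier_const :: real where
  "barrier_const = (barrier_slope * drift_const + lam + 1) / r"

definition barrier :: "real \<Rightarrow> real" where
  "barrier x = barrier_const + barrier_slope * bracket x"

definition barrier' :: "real \<Rightarrow> real" where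
  "barrier' x = barrier_slope * x / bracket x"

definition barrier'' :: "real \<Rightarrow> real" where
  "barrier'' x = barrier_slope / bracket x ^ 3"

lemma barrier_slope_pos: "barrier_slope > 0"
  unfolding barrier_slope_def using r_gt_L by simp

lemma barrier_const_pos: "barrier_const > 0"
proof -
  have "barrier_slope * drift_const \<ge> 0"
    unfolding drift_const_def using barrier_slope_pos by simp
  then show ?thesis
    unfolding barrier_const_def using r_pos lam_pos by (intro divide_pos_pos) linarith+
qed

lemma barrier_pos: "barrier x > 0"
  unfolding barrier_def using barrier_const_pos barrier_slope_pos bracket_ge_1[of x]
  by (simp add: add_pos_pos)

lemma continuous_on_barrier: "continuous_on S barrier"
  unfolding barrier_def bracket_def by (intro continuous_intros)

lemma barrier_deriv: "(barrier has_real_derivative barrier' x) (at x)"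
  unfolding barrier_def barrier'_def using bracket_deriv[of x]
  by (auto intro!: derivative_eq_intros)

lemma barrier'_deriv: "(barrier' has_real_derivative barrier'' x) (at x)"
proof -
  have "bracket x > 0" using bracket_ge_1[of x] by linarith
  then have "(barrier_slope * bracket x - barrier_slope * x * (x / bracket x)) / (bracket x * bracket x)
      = barrier_slope * ((bracket x)\<^sup>2 - x\<^sup>2) / bracket x ^ 3"
    by (simp add: field_simps power2_eq_square power3_eq_cube)
  also have "\<dots> = barrier'' x"
    unfolding barrier''_def by (simp add: bracket_def)
  finally have "(barrier_slope * bracket x - barrier_slope * x * (x / bracket x)) / (bracket x * bracket x)
      = barrier'' x" .
  with \<open>bracket x > 0\<close> show ?thesis
    unfolding barrier'_def using bracket_deriv[of x] by (auto intro!: derivative_eq_intros)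
qed

lemma barrier_operator_bound:
  "\<bar>(\<sigma> x)\<^sup>2 / 2 * barrier'' x + b x * barrier' x\<bar> \<le> barrier_slope * (drift_const + L * bracket x)"
proof -
  have br: "bracket x \<ge> 1" "bracket x \<ge> \<bar>x\<bar>" by (rule bracket_ge_1 bracket_ge_abs)+
  have B: "barrier_slope > 0" by (rule barrier_slope_pos)
  have Lx: "L * \<bar>x\<bar> \<le> L * bracket x"
    using br L_pos by simp
  have "\<bar>b x\<bar> \<le> \<bar>b 0\<bar> + L * bracket x"
    using b_lip[of x 0] Lx by simp
  moreover have "\<bar>b x\<bar> * (\<bar>x\<bar> / bracket x) \<le> \<bar>b x\<bar>"
    using br by (intro mult_left_le) (auto simp: divide_le_eq_1)
  ultimately have "\<bar>b x\<bar> * (\<bar>x\<bar> / bracket x) \<le> \<bar>b 0\<bar> + L * bracket x"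
    by linarith
  moreover have "\<bar>b x * barrier' x\<bar> = barrier_slope * (\<bar>b x\<bar> * (\<bar>x\<bar> / bracket x))"
    unfolding barrier'_def using B br by (simp add: abs_mult)
  ultimately have drift: "\<bar>b x * barrier' x\<bar> \<le> barrier_slope * (\<bar>b 0\<bar> + L * bracket x)"
    using B by (metis mult_left_mono less_imp_le)
  define s where "s = \<bar>\<sigma> 0\<bar> + L"
  have "\<bar>\<sigma> x\<bar> \<le> s * bracket x"
    using sigma_lip[of x 0] Lx mult_left_mono[OF br(1) abs_ge_zero, of "\<sigma> 0"]
    unfolding s_def by (simp add: distrib_right)
  then have sigma2: "(\<sigma> x)\<^sup>2 \<le> s\<^sup>2 * (bracket x)\<^sup>2"
    by (metis abs_ge_zero power2_abs power_mono power_mult_distrib)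
  have "(\<sigma> x)\<^sup>2 / 2 * barrier'' x = barrier_slope * (\<sigma> x)\<^sup>2 / (2 * bracket x ^ 3)"
    unfolding barrier''_def by simp
  also have "\<dots> \<le> barrier_slope * (s\<^sup>2 * (bracket x)\<^sup>2) / (2 * bracket x ^ 3)"
    using B br sigma2 by (intro divide_right_mono mult_left_mono) auto
  also have "\<dots> = barrier_slope * s\<^sup>2 / 2 / bracket x"
    using br by (simp add: power2_eq_square power3_eq_cube)
  also have "\<dots> \<le> barrier_slope * s\<^sup>2 / 2"
    using divide_left_mono[OF br(1), of "barrier_slope * s\<^sup>2 / 2"] B br(1) by simp
  finally have diffusion: "(\<sigma> x)\<^sup>2 / 2 * barrier'' x \<le> barrier_slope * s\<^sup>2 / 2" .
  have "(\<sigma> x)\<^sup>2 / 2 * barrier'' x \<ge> 0"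
    unfolding barrier''_def using B br by simp
  moreover have "barrier_slope * (drift_const + L * bracket x)
      = barrier_slope * (\<bar>b 0\<bar> + L * bracket x) + barrier_slope * s\<^sup>2 / 2"
    unfolding drift_const_def s_def by (simp add: algebra_simps)
  ultimately show ?thesis
    using drift diffusion abs_triangle_ineq[of "(\<sigma> x)\<^sup>2 / 2 * barrier'' x" "b x * barrier' x"]
    by linarith
qed

lemma r_barrier:
  "r * barrier x = barrier_slope * (drift_const + L * bracket x) + lam + 1 + (\<bar>Lf\<bar> + 1) * bracket x"
proof -
  have "r * barrier_slope = \<bar>Lf\<bar> + 1 + L * barrier_slope"
    unfolding barrier_slope_def using r_gt_L by (simp add: field_simps)
  moreover have "r * barrier_const = barrier_slope * drift_const + lam + 1"
    unfolding barrier_const_def using r_pos by simp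
  ultimately show ?thesis
    unfolding barrier_def by (simp add: distrib_left distrib_right mult.assoc[symmetric])
qed

lemma barrier_supersolution: "(\<sigma> x)\<^sup>2 / 2 * barrier'' x + b x * barrier' x < H x (barrier x)"
proof -
  define M where "M = barrier_slope * (drift_const + L * bracket x)"
  have "f x \<le> \<bar>Lf\<bar> * bracket x"
    using f_le[of x] mult_left_mono[OF bracket_ge_abs[of x] abs_ge_zero[of Lf]] by linarith
  moreover have "(\<bar>Lf\<bar> + 1) * bracket x = \<bar>Lf\<bar> * bracket x + bracket x"
    by (simp add: algebra_simps)
  ultimately have "M < r * barrier x - f x"
    using r_barrier[of x, folded M_def] bracket_ge_1[of x] lam_pos by linarith
  moreover have "(\<sigma> x)\<^sup>2 / 2 * barrier'' x + b x * barrier' x \<le> M"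
    using barrier_operator_bound[of x, folded M_def] by linarith
  moreover have "lam * exp ((barrier x - \<phi> x) / lam) > 0"
    using lam_pos by simp
  ultimately show ?thesis
    unfolding H_def by linarith
qed

lemma barrier_subsolution: "(\<sigma> x)\<^sup>2 / 2 * - barrier'' x + b x * - barrier' x > H x (- barrier x)"
proof -
  define M where "M = barrier_slope * (drift_const + L * bracket x)"
  have "exp ((- barrier x - \<phi> x) / lam) \<le> 1"
    using barrier_pos[of x] phi_nonneg[rule_format, of x] lam_pos by (simp add: divide_nonpos_pos)
  then have "lam * exp ((- barrier x - \<phi> x) / lam) \<le> lam"
    using lam_pos by simp
  moreover have "0 \<le> (\<bar>Lf\<bar> + 1) * bracket x"
    using bracket_ge_1[of x] by simp
  moreover have "(\<sigma> x)\<^sup>2 / 2 * barrier'' x + b x * barrier' x \<le> M"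
    using barrier_operator_bound[of x, folded M_def] by linarith
  moreover have "(\<sigma> x)\<^sup>2 / 2 * - barrier'' x + b x * - barrier' x
      = - ((\<sigma> x)\<^sup>2 / 2 * barrier'' x + b x * barrier' x)" "r * - barrier x = - (r * barrier x)"
    by simp_all
  ultimately show ?thesis
    using r_barrier[of x, folded M_def] f_nonneg[rule_format, of x] unfolding H_def by linarith
qed

section \<open>Integrated form of the equation\<close>

definition solves_on :: "real set \<Rightarrow> (real \<Rightarrow> real \<Rightarrow> real) \<Rightarrow> (real \<Rightarrow> real) \<Rightarrow> bool" where
  "solves_on S h V \<longleftrightarrow> (\<exists>V1 V2. \<forall>x\<in>S. (V has_real_derivative V1 x) (at x) \<and>
     (V1 has_real_derivative V2 x) (at x) \<and> (\<sigma> x)\<^sup>2 / 2 * V2 x + b x * V1 x = h x (V x))"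

lemma solves_on_subset: "solves_on S h V \<Longrightarrow> T \<subseteq> S \<Longrightarrow> solves_on T h V"
  unfolding solves_on_def by blast

text \<open>With the integrating factor \<open>p\<^sub>a = ifac a\<close> and \<open>q\<^sub>a = ifac_weight a\<close>, the equation
  \<open>\<sigma>\<^sup>2/2 V'' + b V' = h\<close> becomes \<open>(p\<^sub>a V')' = q\<^sub>a h\<close>, which integrates twice from \<open>a\<close>.\<close>
definition beta :: "real \<Rightarrow> real" where
  "beta x = 2 * b x / (\<sigma> x)\<^sup>2"

definition ifac :: "real \<Rightarrow> real \<Rightarrow> real" where
  "ifac a x = exp (integral {a..x} beta)"

definition ifac_weight :: "real \<Rightarrow> real \<Rightarrow> real" where
  "ifac_weight a x = 2 * ifac a x / (\<sigma> x)\<^sup>2"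

definition inv_ifac_integral :: "real \<Rightarrow> real \<Rightarrow> real" where
  "inv_ifac_integral a x = integral {a..x} (\<lambda>t. 1 / ifac a t)"

definition flux :: "real \<Rightarrow> (real \<Rightarrow> real \<Rightarrow> real) \<Rightarrow> (real \<Rightarrow> real) \<Rightarrow> real \<Rightarrow> real" where
  "flux a h V t = integral {a..t} (\<lambda>s. ifac_weight a s * h s (V s))"

definition flux_integral :: "real \<Rightarrow> (real \<Rightarrow> real \<Rightarrow> real) \<Rightarrow> (real \<Rightarrow> real) \<Rightarrow> real \<Rightarrow> real" where
  "flux_integral a h V x = integral {a..x} (\<lambda>t. flux a h V t / ifac a t)"

lemma continuous_on_beta: "continuous_on S beta"
  unfolding beta_def using sigma_nonzero
  by (intro continuous_intros continuous_on_b continuous_on_sigma) auto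

lemma ifac_pos: "ifac a x > 0"
  unfolding ifac_def by simp

lemma ifac_nonzero: "ifac a x \<noteq> 0"
  using ifac_pos[of a x] by simp

lemma continuous_on_ifac: "continuous_on {a..c} (ifac a)"
  unfolding ifac_def
  by (intro continuous_intros indefinite_integral_continuous_1 integrable_continuous_real continuous_on_beta)

lemma continuous_on_inv_ifac: "continuous_on {a..c} (\<lambda>t. 1 / ifac a t)"
  using ifac_nonzero by (intro continuous_intros continuous_on_ifac) auto

lemma continuous_on_ifac_weight: "continuous_on {a..c} (ifac_weight a)"
  unfolding ifac_weight_def using sigma_nonzero
  by (intro continuous_intros continuous_on_ifac continuous_on_sigma) auto

lemma ifac_deriv_within:
  assumes "x \<in> {a..c}"
  shows "(ifac a has_real_derivative beta x * ifac a x) (at x within {a..c})"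
proof -
  have "((\<lambda>u. integral {a..u} beta) has_real_derivative beta x) (at x within {a..c})"
    using integral_has_vector_derivative[OF continuous_on_beta assms]
    by (simp add: has_real_derivative_iff_has_vector_derivative)
  then show ?thesis unfolding ifac_def by (auto intro!: derivative_eq_intros)
qed

lemma ifac_deriv:
  assumes "x \<in> {a<..<c}"
  shows "(ifac a has_real_derivative beta x * ifac a x) (at x)"
  using ifac_deriv_within[of x a c] at_within_interior[of x "{a..c}"] assms by auto

lemma inv_ifac_integral_pos:
  assumes "a < c"
  shows "inv_ifac_integral a c > 0"
proof -
  have "{a..c} \<noteq> {}" using assms by simp
  then obtain t0 where t0: "\<forall>t\<in>{a..c}. 1 / ifac a t0 \<le> 1 / ifac a t"
    using continuous_attains_inf[OF compact_Icc _ continuous_on_inv_ifac] by blast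
  have "integral {a..c} (\<lambda>_. 1 / ifac a t0) \<le> inv_ifac_integral a c"
    unfolding inv_ifac_integral_def
    using t0 by (intro integral_le integrable_continuous_real continuous_on_inv_ifac) auto
  moreover have "integral {a..c} (\<lambda>_. 1 / ifac a t0) = (c - a) * (1 / ifac a t0)"
    using assms by simp
  moreover have "(c - a) * (1 / ifac a t0) > 0"
    using assms ifac_pos[of a t0] by simp
  ultimately show ?thesis by linarith
qed

lemma ifac_self: "ifac a a = 1"
  unfolding ifac_def by simp

lemma continuous_on_flux:
  assumes "continuous_on {a..c} (\<lambda>t. h t (V t))"
  shows "continuous_on {a..c} (flux a h V)"
  unfolding flux_def
  by (intro indefinite_integral_continuous_1 integrable_continuous_real continuous_intros
      continuous_on_ifac_weight assms)

lemma integral_flux_over_ifac: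
  assumes "continuous_on {a..x} (flux a h V)"
  shows "integral {a..x} (\<lambda>t. (w + flux a h V t) / ifac a t)
    = w * inv_ifac_integral a x + flux_integral a h V x"
proof -
  have i1: "(\<lambda>t. w * (1 / ifac a t)) integrable_on {a..x}"
    by (intro integrable_continuous_real continuous_intros continuous_on_inv_ifac)
  have i2: "(\<lambda>t. flux a h V t / ifac a t) integrable_on {a..x}"
    using ifac_nonzero by (intro integrable_continuous_real continuous_intros assms continuous_on_ifac) auto
  have "integral {a..x} (\<lambda>t. (w + flux a h V t) / ifac a t)
      = integral {a..x} (\<lambda>t. w * (1 / ifac a t) + flux a h V t / ifac a t)"
    by (rule integral_cong) (simp add: add_divide_distrib)
  also have "\<dots> = integral {a..x} (\<lambda>t. w * (1 / ifac a t)) + flux_integral a h V x"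
    unfolding flux_integral_def by (rule integral_add[OF i1 i2])
  also have "integral {a..x} (\<lambda>t. w * (1 / ifac a t)) = w * inv_ifac_integral a x"
    unfolding inv_ifac_integral_def by (rule integral_mult_right)
  finally show ?thesis .
qed

text \<open>The constant \<open>w\<close> is the value at \<open>a\<close> of \<open>p\<^sub>a V'\<close>.\<close>
lemma solves_on_of_representation:
  assumes ch: "continuous_on {a..c} (\<lambda>t. h t (V t))"
    and rep: "\<And>x. x \<in> {a..c} \<Longrightarrow> V x = V a + w * inv_ifac_integral a x + flux_integral a h V x"
  shows "solves_on {a<..<c} h V"
proof -
  define W where "W t = w + flux a h V t" for t
  define V1 where "V1 t = W t / ifac a t" for t
  define V2 where "V2 t = 2 / (\<sigma> t)\<^sup>2 * h t (V t) - 2 * b t / (\<sigma> t)\<^sup>2 * V1 t" for t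
  have cW: "continuous_on {a..c} W"
    unfolding W_def by (intro continuous_intros continuous_on_flux ch)
  have cV1: "continuous_on {a..c} V1"
    unfolding V1_def using ifac_nonzero by (intro continuous_intros cW continuous_on_ifac) auto
  have V_eq: "V x = V a + integral {a..x} V1" if x: "x \<in> {a..c}" for x
  proof -
    have "continuous_on {a..x} (flux a h V)"
      using x by (intro continuous_on_subset[OF continuous_on_flux[of a c h V, OF ch]]) auto
    then show ?thesis
      unfolding V1_def W_def using integral_flux_over_ifac[of a x h V w] rep[OF x] by simp
  qed
  have W_eq: "W x = w + integral {a..x} (\<lambda>t. ifac_weight a t * h t (V t))" for x
    unfolding W_def flux_def ..
  show ?thesis
    unfolding solves_on_def
  proof (intro exI ballI conjI)
    fix x assume x: "x \<in> {a<..<c}"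
    show "(V has_real_derivative V1 x) (at x)"
      by (rule has_real_derivative_indefinite_integral[OF cV1 x V_eq])
    have "(W has_real_derivative ifac_weight a x * h x (V x)) (at x)"
      by (rule has_real_derivative_indefinite_integral[OF _ x W_eq])
        (intro continuous_intros continuous_on_ifac_weight ch)
    note quotient = quotient_by_integrating_factor[OF this[unfolded ifac_weight_def]
        ifac_deriv[OF x, unfolded beta_def] ifac_nonzero sigma2_pos[THEN less_imp_neq, symmetric]]
    show "(V1 has_real_derivative V2 x) (at x)"
      unfolding V1_def V2_def using quotient(1) .
    show "(\<sigma> x)\<^sup>2 / 2 * V2 x + b x * V1 x = h x (V x)"
      unfolding V1_def V2_def using quotient(2) .
  qed
qed

lemma representation_of_solution:
  assumes "x \<in> {a..c}"
    and d1: "\<And>t. t \<in> {a..c} \<Longrightarrow> (V has_real_derivative V1 t) (at t)"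
    and d2: "\<And>t. t \<in> {a..c} \<Longrightarrow> (V1 has_real_derivative V2 t) (at t)"
    and eq: "\<And>t. t \<in> {a..c} \<Longrightarrow> (\<sigma> t)\<^sup>2 / 2 * V2 t + b t * V1 t = h t (V t)"
    and ch: "continuous_on {a..c} (\<lambda>t. h t (V t))"
  shows "V x = V a + V1 a * inv_ifac_integral a x + flux_integral a h V x"
proof -
  have ac: "a \<le> c" using assms(1) by simp
  have dW: "((\<lambda>t. ifac a t * V1 t) has_real_derivative ifac_weight a t * h t (V t)) (at t within {a..c})"
    if t: "t \<in> {a..c}" for t
  proof -
    have "p * v2 + 2 * bb / s2 * p * v1 = 2 * p / s2 * (s2 / 2 * v2 + bb * v1)"
      if "s2 \<noteq> 0" for p v2 bb s2 v1 :: real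
      using that by (simp add: field_simps)
    then have "ifac a t * V2 t + beta t * ifac a t * V1 t = ifac_weight a t * h t (V t)"
      unfolding ifac_weight_def beta_def eq[OF t, symmetric] using sigma_nonzero[of t] by simp
    then show ?thesis
      using DERIV_mult'[OF ifac_deriv_within[OF t] has_field_derivative_at_within[OF d2[OF t]]] by simp
  qed
  have V1_eq: "V1 t = (V1 a + flux a h V t) / ifac a t" if t: "t \<in> {a..c}" for t
  proof -
    have "ifac a t * V1 t = ifac a a * V1 a + flux a h V t"
      unfolding flux_def
    proof (rule integral_eq_of_derivative[where F = "\<lambda>t. ifac a t * V1 t"])
      show "a \<le> t" using t by simp
      fix s assume "s \<in> {a..t}"
      then show "((\<lambda>t. ifac a t * V1 t) has_real_derivative ifac_weight a s * h s (V s)) (at s within {a..t})"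
        using t by (intro DERIV_subset[OF dW]) auto
    qed
    then show ?thesis using ifac_nonzero[of a t] by (simp add: ifac_self field_simps)
  qed
  have sub: "{a..x} \<subseteq> {a..c}" using assms(1) by auto
  have "V x = V a + integral {a..x} V1"
  proof (rule integral_eq_of_derivative)
    show "a \<le> x" using assms(1) by simp
    fix t assume "t \<in> {a..x}"
    then show "(V has_real_derivative V1 t) (at t within {a..x})"
      using sub by (auto intro!: has_field_derivative_at_within[OF d1])
  qed
  also have "integral {a..x} V1 = integral {a..x} (\<lambda>t. (V1 a + flux a h V t) / ifac a t)"
    by (rule integral_cong, rule V1_eq) (use sub in auto)
  also have "\<dots> = V1 a * inv_ifac_integral a x + flux_integral a h V x"
    by (intro integral_flux_over_ifac continuous_on_subset[OF continuous_on_flux[of a c h V, OF ch] sub])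
  finally show ?thesis by simp
qed

section \<open>The Dirichlet problem on bounded intervals\<close>

definition clip :: "real \<Rightarrow> real \<Rightarrow> real" where
  "clip x v = max (- barrier x) (min (barrier x) v)"

definition H_clip :: "real \<Rightarrow> real \<Rightarrow> real" where
  "H_clip x v = H x (clip x v)"

definition H_clip_bound :: "real \<Rightarrow> real" where
  "H_clip_bound x = r * barrier x + f x + lam * exp (barrier x / lam)"

lemma abs_clip_le: "\<bar>clip x v\<bar> \<le> barrier x"
  unfolding clip_def using barrier_pos[of x] by auto

lemma clip_eq_self: "\<bar>v\<bar> \<le> barrier x \<Longrightarrow> clip x v = v"
  unfolding clip_def by auto

lemma clip_upper: "v \<ge> barrier x \<Longrightarrow> clip x v = barrier x"
  unfolding clip_def using barrier_pos[of x] by auto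

lemma clip_lower: "v \<le> - barrier x \<Longrightarrow> clip x v = - barrier x"
  unfolding clip_def using barrier_pos[of x] by auto

lemma continuous_on_H_clip: "continuous_on S V \<Longrightarrow> continuous_on S (\<lambda>t. H_clip t (V t))"
  unfolding H_clip_def H_def clip_def using lam_pos
  by (intro continuous_intros continuous_on_barrier continuous_on_f continuous_on_phi) auto

lemma continuous_on_H_clip_bound: "continuous_on S H_clip_bound"
  unfolding H_clip_bound_def using lam_pos
  by (intro continuous_intros continuous_on_barrier continuous_on_f) auto

lemma abs_H_clip_le: "\<bar>H_clip x v\<bar> \<le> H_clip_bound x"
proof -
  have c: "\<bar>clip x v\<bar> \<le> barrier x" by (rule abs_clip_le)
  have "exp ((clip x v - \<phi> x) / lam) \<le> exp (barrier x / lam)"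
    using c phi_nonneg[rule_format, of x] lam_pos by (auto intro!: divide_right_mono)
  then have "0 < lam * exp ((clip x v - \<phi> x) / lam)"
    "lam * exp ((clip x v - \<phi> x) / lam) \<le> lam * exp (barrier x / lam)"
    using lam_pos by auto
  moreover have "\<bar>r * clip x v\<bar> \<le> r * barrier x"
    using c r_pos by (simp add: abs_mult)
  ultimately show ?thesis
    unfolding H_clip_def H_def H_clip_bound_def using f_nonneg[rule_format, of x]
    by (simp add: abs_le_iff)
qed

lemma H_clip_lipschitz: "\<bar>H_clip x u - H_clip x v\<bar> \<le> (r + exp (barrier x / lam)) * \<bar>u - v\<bar>"
proof -
  define cu where "cu = clip x u"
  define cv where "cv = clip x v"
  have cuv: "\<bar>cu - cv\<bar> \<le> \<bar>u - v\<bar>" unfolding cu_def cv_def clip_def by auto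
  have "max ((cu - \<phi> x) / lam) ((cv - \<phi> x) / lam) \<le> barrier x / lam"
    using abs_clip_le[of x u] abs_clip_le[of x v] phi_nonneg[rule_format, of x] lam_pos
    unfolding cu_def cv_def by (auto intro!: divide_right_mono)
  then have "\<bar>exp ((cu - \<phi> x) / lam) - exp ((cv - \<phi> x) / lam)\<bar>
      \<le> exp (barrier x / lam) * \<bar>(cu - \<phi> x) / lam - (cv - \<phi> x) / lam\<bar>"
    by (meson abs_exp_diff_le abs_ge_zero exp_le_cancel_iff mult_right_mono order_trans)
  also have "\<bar>(cu - \<phi> x) / lam - (cv - \<phi> x) / lam\<bar> = \<bar>cu - cv\<bar> / lam"
    using lam_pos by (simp add: diff_divide_distrib[symmetric])
  finally have "lam * \<bar>exp ((cu - \<phi> x) / lam) - exp ((cv - \<phi> x) / lam)\<bar> \<le> exp (barrier x / lam) * \<bar>cu - cv\<bar>"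
    using lam_pos by (simp add: field_simps)
  moreover have "H_clip x u - H_clip x v
      = r * (cu - cv) + lam * (exp ((cu - \<phi> x) / lam) - exp ((cv - \<phi> x) / lam))"
    unfolding H_clip_def H_def cu_def cv_def by (simp add: algebra_simps)
  then have "\<bar>H_clip x u - H_clip x v\<bar>
      \<le> r * \<bar>cu - cv\<bar> + lam * \<bar>exp ((cu - \<phi> x) / lam) - exp ((cv - \<phi> x) / lam)\<bar>"
    using r_pos lam_pos abs_triangle_ineq by (metis abs_mult abs_of_pos)
  ultimately have "\<bar>H_clip x u - H_clip x v\<bar> \<le> (r + exp (barrier x / lam)) * \<bar>cu - cv\<bar>"
    by (simp add: algebra_simps)
  also have "\<dots> \<le> (r + exp (barrier x / lam)) * \<bar>u - v\<bar>"
    using cuv r_pos by (intro mult_left_mono) auto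
  finally show ?thesis .
qed

lemma H_clip_bound_nonneg: "H_clip_bound x \<ge> 0"
  using abs_H_clip_le[of x 0] by linarith

lemma abs_H_le: "\<bar>v\<bar> \<le> barrier x \<Longrightarrow> \<bar>H x v\<bar> \<le> H_clip_bound x"
  using abs_H_clip_le[of x v] by (simp add: H_clip_def clip_eq_self)

definition flux_bound :: "real \<Rightarrow> real \<Rightarrow> real" where
  "flux_bound a c = integral {a..c} (\<lambda>s. \<bar>ifac_weight a s\<bar> * H_clip_bound s)"

lemma abs_flux_le_flux_bound:
  assumes ch: "continuous_on {a..c} (\<lambda>s. h s (V s))"
    and hb: "\<And>s. s \<in> {a..c} \<Longrightarrow> \<bar>h s (V s)\<bar> \<le> H_clip_bound s"
    and t: "t \<in> {a..c}"
  shows "\<bar>flux a h V t\<bar> \<le> flux_bound a c"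
proof -
  have st: "{a..t} \<subseteq> {a..c}" using t by auto
  have cd: "continuous_on {a..c} (\<lambda>s. \<bar>ifac_weight a s\<bar> * H_clip_bound s)"
    by (intro continuous_intros continuous_on_ifac_weight continuous_on_H_clip_bound)
  have "norm (flux a h V t) \<le> integral {a..t} (\<lambda>s. \<bar>ifac_weight a s\<bar> * H_clip_bound s)"
    unfolding flux_def
  proof (rule integral_norm_bound_integral)
    show "(\<lambda>s. ifac_weight a s * h s (V s)) integrable_on {a..t}"
      by (intro integrable_continuous_real continuous_intros continuous_on_subset[OF continuous_on_ifac_weight st]
          continuous_on_subset[OF ch st])
    show "(\<lambda>s. \<bar>ifac_weight a s\<bar> * H_clip_bound s) integrable_on {a..t}"
      by (intro integrable_continuous_real continuous_on_subset[OF cd st])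
    fix s assume "s \<in> {a..t}"
    then show "norm (ifac_weight a s * h s (V s)) \<le> \<bar>ifac_weight a s\<bar> * H_clip_bound s"
      using hb st by (auto simp: abs_mult intro: mult_left_mono)
  qed
  also have "\<dots> \<le> flux_bound a c"
    unfolding flux_bound_def
    by (intro integral_subset_le[OF st] integrable_continuous_real cd continuous_on_subset[OF cd st])
      (auto intro!: mult_nonneg_nonneg H_clip_bound_nonneg)
  finally show ?thesis by simp
qed

lemma abs_flux_integral_le:
  assumes ch: "continuous_on {a..c} (\<lambda>s. h s (V s))"
    and hb: "\<And>s. s \<in> {a..c} \<Longrightarrow> \<bar>h s (V s)\<bar> \<le> H_clip_bound s"
  shows "\<bar>flux_integral a h V c\<bar> \<le> flux_bound a c * inv_ifac_integral a c"
proof -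
  have "norm (flux_integral a h V c) \<le> integral {a..c} (\<lambda>t. flux_bound a c * (1 / ifac a t))"
    unfolding flux_integral_def
  proof (rule integral_norm_bound_integral)
    show "(\<lambda>t. flux a h V t / ifac a t) integrable_on {a..c}"
      using ifac_nonzero
      by (intro integrable_continuous_real continuous_intros continuous_on_flux ch continuous_on_ifac) auto
    show "(\<lambda>t. flux_bound a c * (1 / ifac a t)) integrable_on {a..c}"
      by (intro integrable_continuous_real continuous_intros continuous_on_inv_ifac)
    fix t assume "t \<in> {a..c}"
    then show "norm (flux a h V t / ifac a t) \<le> flux_bound a c * (1 / ifac a t)"
      using abs_flux_le_flux_bound[of a c h V, OF ch hb] ifac_pos[of a t] by (auto simp: abs_divide divide_right_mono)
  qed
  then show ?thesis
    unfolding inv_ifac_integral_def integral_mult_right[symmetric] by simp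
qed

definition shooting_field :: "real \<Rightarrow> real \<Rightarrow> real \<times> real \<Rightarrow> real \<times> real" where
  "shooting_field a t y = (snd y / ifac a t, ifac_weight a t * H_clip t (fst y))"

lemma continuous_on_shooting_field:
  "continuous_on {a..c} Y \<Longrightarrow> continuous_on {a..c} (\<lambda>t. shooting_field a t (Y t))"
  unfolding shooting_field_def using ifac_nonzero
  by (intro continuous_intros continuous_on_ifac continuous_on_ifac_weight
      continuous_on_H_clip[where V = "\<lambda>t. fst (Y t)"]) auto

lemma shooting_field_lipschitz:
  obtains K where "K > 0"
    "\<And>t y z. t \<in> {a..c} \<Longrightarrow> norm (shooting_field a t y - shooting_field a t z) \<le> K * norm (y - z)"
proof -
  obtain Kp where Kp: "Kp \<ge> 0" "\<And>t. t \<in> {a..c} \<Longrightarrow> \<bar>1 / ifac a t\<bar> \<le> Kp"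
    using continuous_on_Icc_abs_bound[OF continuous_on_inv_ifac] by blast
  obtain Kq where Kq: "Kq \<ge> 0" "\<And>t. t \<in> {a..c} \<Longrightarrow> \<bar>ifac_weight a t\<bar> \<le> Kq"
    using continuous_on_Icc_abs_bound[OF continuous_on_ifac_weight] by blast
  have cE: "continuous_on {a..c} (\<lambda>t. exp (barrier t / lam))"
    using lam_pos by (intro continuous_intros continuous_on_barrier) auto
  obtain KE where KE: "KE \<ge> 0" "\<And>t. t \<in> {a..c} \<Longrightarrow> \<bar>exp (barrier t / lam)\<bar> \<le> KE"
    using continuous_on_Icc_abs_bound[OF cE] by blast
  define K where "K = Kp + Kq * (r + KE) + 1"
  have "norm (shooting_field a t y - shooting_field a t z) \<le> K * norm (y - z)" if t: "t \<in> {a..c}" for t y z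
  proof -
    have nf: "\<bar>fst y - fst z\<bar> \<le> norm (y - z)" and ns: "\<bar>snd y - snd z\<bar> \<le> norm (y - z)"
      using abs_fst_le_norm[of "y - z"] abs_snd_le_norm[of "y - z"] by simp_all
    have "shooting_field a t y - shooting_field a t z
        = ((snd y - snd z) / ifac a t, ifac_weight a t * (H_clip t (fst y) - H_clip t (fst z)))"
      unfolding shooting_field_def by (simp add: diff_divide_distrib right_diff_distrib)
    then have "norm (shooting_field a t y - shooting_field a t z)
        \<le> \<bar>(snd y - snd z) / ifac a t\<bar> + \<bar>ifac_weight a t * (H_clip t (fst y) - H_clip t (fst z))\<bar>"
      using norm_Pair_le by (metis real_norm_def)
    also have "\<dots> = \<bar>1 / ifac a t\<bar> * \<bar>snd y - snd z\<bar> + \<bar>ifac_weight a t\<bar> * \<bar>H_clip t (fst y) - H_clip t (fst z)\<bar>"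
      by (simp add: abs_mult divide_inverse mult.commute)
    also have "\<dots> \<le> Kp * norm (y - z) + Kq * ((r + KE) * norm (y - z))"
    proof (intro add_mono mult_mono)
      have "\<bar>H_clip t (fst y) - H_clip t (fst z)\<bar> \<le> (r + exp (barrier t / lam)) * \<bar>fst y - fst z\<bar>"
        by (rule H_clip_lipschitz)
      also have "\<dots> \<le> (r + KE) * norm (y - z)"
        using KE t nf r_pos by (intro mult_mono) auto
      finally show "\<bar>H_clip t (fst y) - H_clip t (fst z)\<bar> \<le> (r + KE) * norm (y - z)" .
    qed (use Kp Kq KE t ns r_pos in auto)
    also have "\<dots> \<le> K * norm (y - z)"
      unfolding K_def by (simp add: algebra_simps)
    finally show ?thesis .
  qed
  moreover have "K > 0" unfolding K_def using Kp Kq KE r_pos by (simp add: add_nonneg_pos)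
  ultimately show ?thesis using that by blast
qed

text \<open>Shooting from \<open>a\<close> with value \<open>barrier a\<close> and flux \<open>s\<close>: the first order system for
  \<open>(V, p\<^sub>a V')\<close> with the clipped, hence globally Lipschitz, nonlinearity.\<close>
lemma shooting_family:
  assumes ac: "a < c"
  obtains V :: "real \<Rightarrow> real \<Rightarrow> real" where "\<And>s. continuous_on {a..c} (V s)"
    "\<And>s x. x \<in> {a..c} \<Longrightarrow> V s x = barrier a + s * inv_ifac_integral a x + flux_integral a H_clip (V s) x"
    "continuous_on UNIV (\<lambda>s. V s c)"
proof -
  define F where "F = shooting_field a"
  obtain K where K: "K > 0" and lip: "\<And>t y z. t \<in> {a..c} \<Longrightarrow> norm (F t y - F t z) \<le> K * norm (y - z)"
    using shooting_field_lipschitz[where a = a and c = c] unfolding F_def by blast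
  note contF = continuous_on_shooting_field[of a c, folded F_def]
  obtain Sol where Sol_cont: "\<And>y0. continuous_on {a..c} (Sol y0)"
    and Sol_eq: "\<And>y0 x. x \<in> {a..c} \<Longrightarrow> Sol y0 x = y0 + integral {a..x} (\<lambda>t. F t (Sol y0 t))"
    and Sol_dep: "\<And>y0 y1 x. x \<in> {a..c} \<Longrightarrow>
        norm (Sol y0 x - Sol y1 x) \<le> 2 * exp (2 * K * (c - a)) * norm (y0 - y1)"
    using picard_lindeloef_Icc[OF less_imp_le[OF ac] K contF lip] by blast
  define V where "V s t = fst (Sol (barrier a, s) t)" for s t
  define W where "W s t = snd (Sol (barrier a, s) t)" for s t
  have cV: "continuous_on {a..c} (V s)" for s unfolding V_def by (intro continuous_intros Sol_cont)
  have integral_F: "integral {a..x} (\<lambda>t. F t (Sol y0 t))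
      = (integral {a..x} (\<lambda>t. fst (F t (Sol y0 t))), integral {a..x} (\<lambda>t. snd (F t (Sol y0 t))))"
    if "x \<in> {a..c}" for y0 x
  proof -
    have int: "(\<lambda>t. F t (Sol y0 t)) integrable_on {a..x}"
      using that by (intro integrable_continuous_real continuous_on_subset[OF contF[OF Sol_cont]]) auto
    show ?thesis
      using integral_linear[OF int bounded_linear_fst] integral_linear[OF int bounded_linear_snd]
      by (simp add: o_def)
  qed
  have W_eq: "W s x = s + flux a H_clip (V s) x" if x: "x \<in> {a..c}" for s x
    using Sol_eq[OF x, of "(barrier a, s)"] integral_F[OF x] unfolding W_def V_def flux_def F_def shooting_field_def by simp
  have V_eq: "V s x = barrier a + s * inv_ifac_integral a x + flux_integral a H_clip (V s) x"
    if x: "x \<in> {a..c}" for s x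
  proof -
    have "V s x = barrier a + integral {a..x} (\<lambda>t. W s t / ifac a t)"
      using Sol_eq[OF x, of "(barrier a, s)"] integral_F[OF x] unfolding V_def W_def F_def shooting_field_def by simp
    also have "integral {a..x} (\<lambda>t. W s t / ifac a t)
        = integral {a..x} (\<lambda>t. (s + flux a H_clip (V s) t) / ifac a t)"
      by (rule integral_cong) (use x W_eq in auto)
    also have "\<dots> = s * inv_ifac_integral a x + flux_integral a H_clip (V s) x"
      using x by (intro integral_flux_over_ifac
          continuous_on_subset[OF continuous_on_flux[of a c H_clip "V s", OF continuous_on_H_clip[OF cV]]]) auto
    finally show ?thesis by simp
  qed
  have "\<bar>V s c - V s' c\<bar> \<le> 2 * exp (2 * K * (c - a)) * \<bar>s - s'\<bar>" for s s'
  proof -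
    have "\<bar>V s c - V s' c\<bar> \<le> norm (Sol (barrier a, s) c - Sol (barrier a, s') c)"
      unfolding V_def using abs_fst_le_norm[of "Sol (barrier a, s) c - Sol (barrier a, s') c"] by simp
    also have "\<dots> \<le> 2 * exp (2 * K * (c - a)) * \<bar>s - s'\<bar>"
      using Sol_dep[of c "(barrier a, s)" "(barrier a, s')"] ac by (simp add: norm_Pair)
    finally show ?thesis .
  qed
  then have "continuous_on UNIV (\<lambda>s. V s c)"
    by (rule lipschitz_on_continuous_on[OF lipschitz_on_of_abs_bound])
  with cV V_eq show ?thesis using that by blast
qed

lemma dirichlet_clipped:
  assumes ac: "a < c"
  obtains V where "continuous_on {a..c} V" "V a = barrier a" "V c = barrier c" "solves_on {a<..<c} H_clip V"
proof -
  obtain V where cV: "\<And>s. continuous_on {a..c} (V s)"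
    and V_eq: "\<And>s x. x \<in> {a..c} \<Longrightarrow> V s x = barrier a + s * inv_ifac_integral a x + flux_integral a H_clip (V s) x"
    and c_cont: "continuous_on UNIV (\<lambda>s. V s c)"
    using shooting_family[OF ac] by blast
  define M where "M = flux_bound a c * inv_ifac_integral a c"
  have M: "\<bar>flux_integral a H_clip (V s) c\<bar> \<le> M" for s
    unfolding M_def by (intro abs_flux_integral_le continuous_on_H_clip cV abs_H_clip_le)
  define P where "P = inv_ifac_integral a c"
  have P: "P > 0" unfolding P_def by (rule inv_ifac_integral_pos[OF ac])
  have Vc: "\<bar>V s c - (barrier a + s * P)\<bar> \<le> M" for s
    using V_eq[of c s] M[of s] ac unfolding P_def by simp
  \<comment> \<open>the endpoint value grows like \<open>s P\<close> up to the bounded flux term, so it crosses \<open>barrier c\<close>\<close>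
  define s1 where "s1 = (\<bar>barrier c\<bar> + \<bar>barrier a\<bar> + \<bar>M\<bar>) / P"
  have s1P: "s1 * P = \<bar>barrier c\<bar> + \<bar>barrier a\<bar> + \<bar>M\<bar>" unfolding s1_def using P by simp
  have "barrier a + s1 * P - M \<le> V s1 c" "V (- s1) c \<le> barrier a - s1 * P + M"
    using Vc[of s1] Vc[of "- s1"] by (simp_all add: abs_le_iff)
  then have "V (- s1) c \<le> barrier c" "barrier c \<le> V s1 c"
    using s1P abs_ge_self[of "barrier c"] abs_ge_minus_self[of "barrier c"]
      abs_ge_self[of "barrier a"] abs_ge_minus_self[of "barrier a"] abs_ge_self[of M]
    by linarith+
  moreover have "- s1 \<le> s1" using P s1P by (simp add: s1_def)
  ultimately obtain s where s: "V s c = barrier c"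
    using IVT'[of "\<lambda>s. V s c" "- s1" "barrier c" s1] continuous_on_subset[OF c_cont] by blast
  show ?thesis
  proof
    show "continuous_on {a..c} (V s)" by (rule cV)
    show "V s a = barrier a" using V_eq[of a s] ac by (simp add: inv_ifac_integral_def flux_integral_def)
    show "V s c = barrier c" by (rule s)
    show "solves_on {a<..<c} H_clip (V s)"
      using V_eq[of _ s] by (intro solves_on_of_representation[where w = s] continuous_on_H_clip cV)
        (simp add: \<open>V s a = barrier a\<close>)
  qed
qed

definition dirichlet_solution :: "real \<Rightarrow> real \<Rightarrow> (real \<Rightarrow> real) \<Rightarrow> bool" where
  "dirichlet_solution a c V \<longleftrightarrow> continuous_on {a..c} V \<and> V a = barrier a \<and> V c = barrier c \<and>
     (\<forall>x\<in>{a..c}. \<bar>V x\<bar> \<le> barrier x) \<and> solves_on {a<..<c} H V"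

text \<open>By the maximum principle the solution of the clipped problem stays between the
  sub- and supersolution \<open>\<plusminus>barrier\<close>, where clipping is inactive.\<close>
lemma dirichlet_solution_exists:
  assumes ac: "a < c"
  obtains V where "dirichlet_solution a c V"
proof -
  obtain V where cV: "continuous_on {a..c} V" and Va: "V a = barrier a" and Vc: "V c = barrier c"
    and sol: "solves_on {a<..<c} H_clip V"
    using dirichlet_clipped[OF ac] by blast
  obtain V1 V2 where d1: "\<And>x. x \<in> {a<..<c} \<Longrightarrow> (V has_real_derivative V1 x) (at x)"
    and d2: "\<And>x. x \<in> {a<..<c} \<Longrightarrow> (V1 has_real_derivative V2 x) (at x)"
    and eq: "\<And>x. x \<in> {a<..<c} \<Longrightarrow> (\<sigma> x)\<^sup>2 / 2 * V2 x + b x * V1 x = H_clip x (V x)"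
    using sol unfolding solves_on_def by metis
  have upper: "\<forall>x\<in>{a..c}. V x - barrier x \<le> 0"
  proof (rule max_principle_Icc[of a c _ "\<lambda>x. V1 x - barrier' x" "\<lambda>x. V2 x - barrier'' x"])
    fix x assume x: "x \<in> {a<..<c}" and pos: "V x - barrier x > 0" and crit: "V1 x - barrier' x = 0"
    have "(\<sigma> x)\<^sup>2 / 2 * V2 x + b x * V1 x > (\<sigma> x)\<^sup>2 / 2 * barrier'' x + b x * barrier' x"
      using eq[OF x] barrier_supersolution[of x] clip_upper[of x "V x"] pos by (simp add: H_clip_def)
    then show "V2 x - barrier'' x > 0"
      using crit sigma2_pos[of x] by (simp add: algebra_simps zero_less_mult_iff flip: right_diff_distrib)
  qed (use ac cV Va Vc d1 d2 barrier_deriv barrier'_deriv in \<open>auto intro!: derivative_intros continuous_intros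
      continuous_on_barrier\<close>)
  have lower: "\<forall>x\<in>{a..c}. - barrier x - V x \<le> 0"
  proof (rule max_principle_Icc[of a c _ "\<lambda>x. - barrier' x - V1 x" "\<lambda>x. - barrier'' x - V2 x"])
    fix x assume x: "x \<in> {a<..<c}" and pos: "- barrier x - V x > 0" and crit: "- barrier' x - V1 x = 0"
    have "(\<sigma> x)\<^sup>2 / 2 * V2 x + b x * V1 x < (\<sigma> x)\<^sup>2 / 2 * - barrier'' x + b x * - barrier' x"
      using eq[OF x] barrier_subsolution[of x] clip_lower[of "V x" x] pos by (simp add: H_clip_def)
    moreover have "V1 x = - barrier' x" using crit by simp
    ultimately have "(\<sigma> x)\<^sup>2 / 2 * V2 x < (\<sigma> x)\<^sup>2 / 2 * - barrier'' x" by simp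
    then show "- barrier'' x - V2 x > 0"
      using mult_less_cancel_left_pos[of "(\<sigma> x)\<^sup>2 / 2" "V2 x" "- barrier'' x"] sigma2_pos[of x] by simp
  qed (use ac cV Va Vc d1 d2 barrier_deriv barrier'_deriv barrier_pos[THEN less_imp_le] in
      \<open>auto intro!: derivative_intros continuous_intros continuous_on_barrier\<close>)
  have bound: "\<forall>x\<in>{a..c}. \<bar>V x\<bar> \<le> barrier x"
    using upper lower by (auto simp: abs_le_iff)
  then have "solves_on {a<..<c} H V"
    using d1 d2 eq unfolding solves_on_def H_clip_def by (intro exI[of _ V1] exI[of _ V2]) (auto simp: clip_eq_self)
  then show ?thesis
    using that cV Va Vc bound unfolding dirichlet_solution_def by blast
qed

lemma dirichlet_solution_le:
  assumes U: "dirichlet_solution a' c' U" and V: "dirichlet_solution a c V"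
    and le: "a' \<le> a" "a < c" "c \<le> c'" and x: "x \<in> {a..c}"
  shows "U x \<le> V x"
proof -
  have sub: "{a<..<c} \<subseteq> {a'<..<c'}" "{a..c} \<subseteq> {a'..c'}" using le by auto
  obtain U1 U2 where dU: "\<And>x. x \<in> {a'<..<c'} \<Longrightarrow> (U has_real_derivative U1 x) (at x) \<and>
      (U1 has_real_derivative U2 x) (at x) \<and> (\<sigma> x)\<^sup>2 / 2 * U2 x + b x * U1 x = H x (U x)"
    using U unfolding dirichlet_solution_def solves_on_def by metis
  obtain V1 V2 where dV: "\<And>x. x \<in> {a<..<c} \<Longrightarrow> (V has_real_derivative V1 x) (at x) \<and>
      (V1 has_real_derivative V2 x) (at x) \<and> (\<sigma> x)\<^sup>2 / 2 * V2 x + b x * V1 x = H x (V x)"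
    using V unfolding dirichlet_solution_def solves_on_def by metis
  have "\<forall>x\<in>{a..c}. U x - V x \<le> 0"
  proof (rule max_principle_Icc[of a c _ "\<lambda>x. U1 x - V1 x" "\<lambda>x. U2 x - V2 x"])
    show "continuous_on {a..c} (\<lambda>x. U x - V x)"
      using U V sub unfolding dirichlet_solution_def by (intro continuous_intros) (auto intro: continuous_on_subset)
    have "a \<in> {a'..c'}" "c \<in> {a'..c'}" using le by auto
    then show "U a - V a \<le> 0" "U c - V c \<le> 0"
      using U V unfolding dirichlet_solution_def by (auto simp: abs_le_iff)
    fix x assume x: "x \<in> {a<..<c}"
    then have x': "x \<in> {a'<..<c'}" using sub by auto
    show "((\<lambda>x. U x - V x) has_real_derivative U1 x - V1 x) (at x)"
      "((\<lambda>x. U1 x - V1 x) has_real_derivative U2 x - V2 x) (at x)"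
      using dU[OF x'] dV[OF x] by (auto intro!: derivative_intros)
    assume "U x - V x > 0" "U1 x - V1 x = 0"
    then have "(\<sigma> x)\<^sup>2 / 2 * (U2 x - V2 x) > 0"
      using dU[OF x'] dV[OF x] H_strict_mono[of "V x" "U x" x] by (simp add: algebra_simps)
    then show "U2 x - V2 x > 0" using sigma2_pos[of x] by (simp add: zero_less_mult_iff)
  qed (use le in simp)
  then show ?thesis using x by auto
qed

section \<open>Passage to the whole line\<close>

lemma flux_H_limit:
  assumes cu: "\<And>k. continuous_on {a..c} (u k)"
    and bd: "\<And>k t. t \<in> {a..c} \<Longrightarrow> \<bar>u k t\<bar> \<le> barrier t"
    and conv: "\<And>t. t \<in> {a..c} \<Longrightarrow> (\<lambda>k. u k t) \<longlonglongrightarrow> Vl t"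
    and t: "t \<in> {a..c}"
  shows "(\<lambda>s. ifac_weight a s * H s (Vl s)) integrable_on {a..t}"
    and "(\<lambda>k. flux a H (u k) t) \<longlonglongrightarrow> flux a H Vl t"
proof -
  have sub: "{a..t} \<subseteq> {a..c}" using t by auto
  define dom where "dom s = \<bar>ifac_weight a s\<bar> * H_clip_bound s" for s
  have "continuous_on {a..t} dom"
    unfolding dom_def
    by (intro continuous_intros continuous_on_subset[OF continuous_on_ifac_weight sub] continuous_on_H_clip_bound)
  then have dom_int: "dom integrable_on {a..t}" by (rule integrable_continuous_real)
  have int: "(\<lambda>s. ifac_weight a s * H s (u k s)) integrable_on {a..t}" for k
    by (intro integrable_continuous_real continuous_intros continuous_on_subset[OF continuous_on_ifac_weight sub]
        continuous_on_H continuous_on_subset[OF cu sub])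
  have le: "norm (ifac_weight a s * H s (u k s)) \<le> dom s" if "s \<in> {a..t}" for k s
    unfolding dom_def using abs_H_le[OF bd, of s k] that sub by (auto simp: abs_mult intro: mult_left_mono)
  have lim: "(\<lambda>k. ifac_weight a s * H s (u k s)) \<longlonglongrightarrow> ifac_weight a s * H s (Vl s)" if "s \<in> {a..t}" for s
    using conv[of s] that sub lam_pos unfolding H_def by (auto intro!: tendsto_intros)
  show "(\<lambda>s. ifac_weight a s * H s (Vl s)) integrable_on {a..t}"
    and "(\<lambda>k. flux a H (u k) t) \<longlonglongrightarrow> flux a H Vl t"
    using dominated_convergence[OF int dom_int le lim] unfolding flux_def by auto
qed

lemma flux_integral_H_limit:
  assumes cu: "\<And>k. continuous_on {a..c} (u k)"
    and bd: "\<And>k t. t \<in> {a..c} \<Longrightarrow> \<bar>u k t\<bar> \<le> barrier t"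
    and conv: "\<And>t. t \<in> {a..c} \<Longrightarrow> (\<lambda>k. u k t) \<longlonglongrightarrow> Vl t"
    and x: "x \<in> {a..c}"
  shows "continuous_on {a..c} (flux a H Vl)"
    and "(\<lambda>k. flux_integral a H (u k) x) \<longlonglongrightarrow> flux_integral a H Vl x"
proof -
  have sub: "{a..x} \<subseteq> {a..c}" using x by auto
  show cont: "continuous_on {a..c} (flux a H Vl)"
    unfolding flux_def using flux_H_limit(1)[OF cu bd conv, of c] x
    by (intro indefinite_integral_continuous_1) auto
  have flux_le: "\<bar>flux a H (u k) t\<bar> \<le> flux_bound a c" if "t \<in> {a..c}" for k t
    using that by (intro abs_flux_le_flux_bound continuous_on_H cu abs_H_le bd)
  have int: "(\<lambda>t. flux a H (u k) t / ifac a t) integrable_on {a..x}" for k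
    using ifac_nonzero
    by (intro integrable_continuous_real continuous_intros continuous_on_subset[OF continuous_on_ifac sub]
        continuous_on_subset[OF continuous_on_flux sub] continuous_on_H cu) auto
  have dom_int: "(\<lambda>t. flux_bound a c * (1 / ifac a t)) integrable_on {a..x}"
    by (intro integrable_continuous_real continuous_intros continuous_on_inv_ifac)
  have le: "norm (flux a H (u k) t / ifac a t) \<le> flux_bound a c * (1 / ifac a t)" if "t \<in> {a..x}" for k t
    using flux_le[of t k] that sub ifac_pos[of a t] by (auto simp: abs_divide divide_right_mono)
  have lim: "(\<lambda>k. flux a H (u k) t / ifac a t) \<longlonglongrightarrow> flux a H Vl t / ifac a t" if "t \<in> {a..x}" for t
    using flux_H_limit(2)[OF cu bd conv, of t] that sub ifac_nonzero by (auto intro!: tendsto_intros)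
  show "(\<lambda>k. flux_integral a H (u k) x) \<longlonglongrightarrow> flux_integral a H Vl x"
    using dominated_convergence(2)[OF int dom_int le lim] unfolding flux_integral_def .
qed

text \<open>Each \<open>u k\<close> has the integral representation with \<open>w = u\<^sub>k'(a)\<close>. The flux integrals
  converge by dominated convergence, hence so do the \<open>u\<^sub>k'(a)\<close> (read off at \<open>x = c\<close>), and the
  limit has the same representation.\<close>
lemma solves_on_limit:
  assumes ac: "a < c"
    and sol: "\<And>k. solves_on {a..c} H (u k)"
    and bd: "\<And>k t. t \<in> {a..c} \<Longrightarrow> \<bar>u k t\<bar> \<le> barrier t"
    and conv: "\<And>t. t \<in> {a..c} \<Longrightarrow> (\<lambda>k. u k t) \<longlonglongrightarrow> Vl t"
  shows "solves_on {a<..<c} H Vl"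
proof -
  obtain u1 u2 where d: "\<And>k t. t \<in> {a..c} \<Longrightarrow> (u k has_real_derivative u1 k t) (at t) \<and>
      (u1 k has_real_derivative u2 k t) (at t) \<and> (\<sigma> t)\<^sup>2 / 2 * u2 k t + b t * u1 k t = H t (u k t)"
    using sol unfolding solves_on_def by metis
  have cu: "continuous_on {a..c} (u k)" for k
    using d by (intro continuous_at_imp_continuous_on ballI DERIV_isCont) blast
  define P where "P = inv_ifac_integral a"
  have rep: "u k x = u k a + u1 k a * P x + flux_integral a H (u k) x" if "x \<in> {a..c}" for k x
    unfolding P_def
  proof (rule representation_of_solution[of x a c "u k" "u1 k" "u2 k" H])
    show "continuous_on {a..c} (\<lambda>t. H t (u k t))" by (rule continuous_on_H[OF cu])
  qed (use that d in blast)+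
  have ca: "a \<in> {a..c}" "c \<in> {a..c}" using ac by auto
  have Pc: "P c > 0" unfolding P_def by (rule inv_ifac_integral_pos[OF ac])
  have R_lim: "(\<lambda>k. flux_integral a H (u k) x) \<longlonglongrightarrow> flux_integral a H Vl x" if "x \<in> {a..c}" for x
    by (rule flux_integral_H_limit(2)[OF cu bd conv that])
  have flux_cont: "continuous_on {a..c} (flux a H Vl)"
    by (rule flux_integral_H_limit(1)[OF cu bd conv ca(1)])
  define w where "w = (Vl c - Vl a - flux_integral a H Vl c) / P c"
  have "u1 k a = (u k c - u k a - flux_integral a H (u k) c) / P c" for k
    using rep[OF ca(2), of k] Pc by (simp add: field_simps)
  then have w_lim: "(\<lambda>k. u1 k a) \<longlonglongrightarrow> w"
    unfolding w_def using conv[OF ca(1)] conv[OF ca(2)] R_lim[OF ca(2)] Pc by (auto intro!: tendsto_intros)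
  have rep_lim: "Vl x = Vl a + w * P x + flux_integral a H Vl x" if x: "x \<in> {a..c}" for x
  proof -
    have "(\<lambda>k. u k x) \<longlonglongrightarrow> Vl a + w * P x + flux_integral a H Vl x"
      unfolding rep[OF x] by (intro tendsto_intros conv[OF ca(1)] w_lim R_lim[OF x])
    then show ?thesis using conv[OF x] LIMSEQ_unique by blast
  qed
  have "continuous_on {a..c} (\<lambda>x. Vl a + w * P x + flux_integral a H Vl x)"
    unfolding P_def inv_ifac_integral_def flux_integral_def using ifac_nonzero
    by (intro continuous_intros indefinite_integral_continuous_1 integrable_continuous_real
        continuous_on_inv_ifac continuous_on_ifac flux_cont) auto
  then have "continuous_on {a..c} Vl"
    using rep_lim by (metis (no_types, lifting) continuous_on_eq)
  then show ?thesis
    using rep_lim unfolding P_def by (intro solves_on_of_representation continuous_on_H)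
qed

lemma whole_line_solution:
  obtains V V' V'' where "\<And>x. (V has_real_derivative V' x) (at x)"
    "\<And>x. (V' has_real_derivative V'' x) (at x)"
    "\<And>x. (\<sigma> x)\<^sup>2 / 2 * V'' x + b x * V' x = H x (V x)" "\<And>x. \<bar>V x\<bar> \<le> barrier x"
proof -
  define R where "R n = real n + 1" for n
  have "\<exists>V. dirichlet_solution (- R n) (R n) V" for n
    by (rule dirichlet_solution_exists[of "- R n" "R n"]) (auto simp: R_def)
  then obtain U where U: "\<And>n. dirichlet_solution (- R n) (R n) (U n)"
    by metis
  have U_bd: "\<bar>U n x\<bar> \<le> barrier x" if "\<bar>x\<bar> \<le> R n" for n x
  proof -
    have "x \<in> {- R n..R n}" using that by (auto simp: abs_le_iff)
    then show ?thesis using U[of n] unfolding dirichlet_solution_def by blast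
  qed
  have U_mono: "U (Suc n) x \<le> U n x" if "\<bar>x\<bar> \<le> R n" for n x
    using that by (intro dirichlet_solution_le[OF U U]) (auto simp: R_def)
  have tail_converges: "\<exists>L. (\<lambda>k. U (k + n) x) \<longlonglongrightarrow> L" if "\<bar>x\<bar> \<le> real n" for n x
  proof -
    have x_in: "\<bar>x\<bar> \<le> R (k + n)" for k
      using that of_nat_0_le_iff[of k] unfolding R_def by simp
    then have "decseq (\<lambda>k. U (k + n) x)"
      by (intro decseq_SucI) (simp add: U_mono)
    moreover have "\<forall>k. - barrier x \<le> U (k + n) x"
      using U_bd[OF x_in] by (metis abs_le_D2 minus_le_iff)
    ultimately show ?thesis by (blast elim: decseq_convergent)
  qed
  have "\<exists>L. (\<lambda>k. U k x) \<longlonglongrightarrow> L" for x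
    using tail_converges[OF real_nat_ceiling_ge] LIMSEQ_offset[where f = "\<lambda>k. U k x"] by blast
  then obtain Vl where lim: "\<And>x. (\<lambda>k. U k x) \<longlonglongrightarrow> Vl x" by metis
  have Vl_bd: "\<bar>Vl x\<bar> \<le> barrier x" for x
  proof -
    have "eventually (\<lambda>k. \<bar>U k x\<bar> \<le> barrier x) sequentially"
      using eventually_ge_at_top[of "nat \<lceil>\<bar>x\<bar>\<rceil>"]
      by eventually_elim (auto intro!: U_bd simp: R_def le_nat_iff)
    then show ?thesis by (intro tendsto_upperbound[OF tendsto_rabs[OF lim]]) auto
  qed
  have "solves_on {- real n<..<real n} H Vl" for n
  proof (cases "n = 0")
    case False
    show ?thesis
    proof (rule solves_on_limit[where u = "\<lambda>k. U (k + n)"])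
      show "- real n < real n" using False by simp
      show "solves_on {- real n..real n} H (U (k + n))" for k
        using U[of "k + n"] unfolding dirichlet_solution_def R_def
        by (auto elim!: solves_on_subset)
      show "\<bar>U (k + n) t\<bar> \<le> barrier t" if "t \<in> {- real n..real n}" for k t
        using that by (intro U_bd) (auto simp: R_def)
      show "(\<lambda>k. U (k + n) t) \<longlonglongrightarrow> Vl t" for t
        by (rule LIMSEQ_ignore_initial_segment[OF lim])
    qed
  qed (simp add: solves_on_def)
  then obtain V' V'' where "\<And>x. (Vl has_real_derivative V' x) (at x)" "\<And>x. (V' has_real_derivative V'' x) (at x)"
    "\<And>x. (\<sigma> x)\<^sup>2 / 2 * V'' x + b x * V' x = H x (Vl x)"
    using glue_local_derivatives[of Vl "\<lambda>x v1 v2. (\<sigma> x)\<^sup>2 / 2 * v2 + b x * v1 = H x (Vl x)"]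
    unfolding solves_on_def by metis
  with Vl_bd that show ?thesis by blast
qed

section \<open>Regularity and growth\<close>

lemma solution_C2_alpha_loc:
  assumes dV: "\<And>x. (V has_real_derivative V' x) (at x)"
    and dV': "\<And>x. (V' has_real_derivative V'' x) (at x)"
    and eq: "\<And>x. (\<sigma> x)\<^sup>2 / 2 * V'' x + b x * V' x = H x (V x)"
    and \<alpha>: "0 < \<alpha>" "\<alpha> < 1"
  shows "C2_alpha_loc \<alpha> V"
proof -
  have V''_eq: "V'' = (\<lambda>x. 2 * (1 / (\<sigma> x)\<^sup>2) * (H x (V x) - b x * V' x))"
  proof
    fix x
    show "V'' x = 2 * (1 / (\<sigma> x)\<^sup>2) * (H x (V x) - b x * V' x)"
      using eq[of x] sigma_nonzero[of x] by (simp add: field_simps)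
  qed
  have cV: "continuous_on UNIV V" and cV': "continuous_on UNIV V'"
    using dV dV' by (auto intro!: continuous_at_imp_continuous_on DERIV_isCont)
  have "continuous_on UNIV V''"
    unfolding V''_eq using sigma_nonzero
    by (intro continuous_intros continuous_on_H continuous_on_b continuous_on_sigma cV cV') auto
  then have "locally_lipschitz V'"
    by (rule locally_lipschitz_of_continuous_deriv[OF dV'])
  moreover have "locally_lipschitz (\<lambda>x. (V x - \<phi> x) / lam)"
    using locally_lipschitz_mult[OF locally_lipschitz_diff[OF locally_lipschitz_of_continuous_deriv[OF dV cV']
          locally_lipschitz_phi] locally_lipschitz_const[of "1 / lam"]]
    by simp
  moreover have "locally_lipschitz (\<lambda>x. 1 / (\<sigma> x)\<^sup>2)"
    using sigma0(1) sigma2_ge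
    by (intro locally_lipschitz_inverse[of _ "sigma0\<^sup>2"])
      (auto simp: power2_eq_square intro!: locally_lipschitz_mult locally_lipschitz_sigma)
  ultimately have "locally_lipschitz V''"
    unfolding V''_eq H_def
    by (intro locally_lipschitz_mult locally_lipschitz_diff locally_lipschitz_add locally_lipschitz_const
        locally_lipschitz_exp locally_lipschitz_f locally_lipschitz_b locally_lipschitz_of_continuous_deriv[OF dV cV'])
  then show ?thesis
    unfolding C2_alpha_loc_def using dV dV' locally_lipschitz_imp_holder \<alpha> by blast
qed

lemma linear_growth_of_barrier_bound:
  assumes "\<And>x. \<bar>V x\<bar> \<le> barrier x"
  shows "linear_growth V"
  unfolding linear_growth_def
proof (intro exI allI impI)
  fix x :: real assume x: "1 \<le> \<bar>x\<bar>"
  have "\<bar>V x\<bar> \<le> barrier_const + barrier_slope * (1 + \<bar>x\<bar>)"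
    using assms[of x] bracket_le[of x] barrier_slope_pos unfolding barrier_def
    by (smt (verit) mult_left_mono)
  also have "\<dots> \<le> (barrier_const + 2 * barrier_slope) * \<bar>x\<bar>"
  proof -
    have "barrier_const \<le> barrier_const * \<bar>x\<bar>" "barrier_slope \<le> barrier_slope * \<bar>x\<bar>"
      using x barrier_const_pos barrier_slope_pos by (simp_all add: mult_le_cancel_left1)
    then show ?thesis by (simp add: algebra_simps)
  qed
  finally show "\<bar>V x / x\<bar> \<le> barrier_const + 2 * barrier_slope"
    using x by (simp add: abs_divide pos_divide_le_eq)
qed

end

theorem theoremA1:
  fixes b \<sigma> f l \<phi> :: "real \<Rightarrow> real"
    and L sigma0 Lf K Ll r lam l_phi :: real
  assumes L_pos: "L > 0"
    and lip_b_sigma: "\<forall>x y. \<bar>b x - b y\<bar> + \<bar>\<sigma> x - \<sigma> y\<bar> \<le> L * \<bar>x - y\<bar>"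
    and sigma0: "sigma0 > 0" "\<forall>x. \<bar>\<sigma> x\<bar> \<ge> sigma0"
    and f_nonneg: "\<forall>x. f x \<ge> 0" and f0: "f 0 = 0"
    and f_lip: "\<forall>x y. \<bar>f x - f y\<bar> \<le> Lf * \<bar>x - y\<bar>"
    and K_pos: "K > 0" and l_inf: "\<forall>x. l x \<ge> K" "l 0 = K"
    and l_sub: "\<forall>x y. l x + l y \<ge> l (x + y) + K"
    and l_coercive: "filterlim l at_top at_infinity"
    and l_lip: "\<forall>x y. \<bar>l x - l y\<bar> \<le> Ll * \<bar>x - y\<bar>"
    and r_lo: "0 < r - (L + L\<^sup>2 / 2)"
    and r_hi: "r - (L + L\<^sup>2 / 2) < Lf / Ll"
    and lam_pos: "lam > 0"
    and phi_lip: "lipschitz_real \<phi>"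
    and phi_lb: "l_phi \<ge> 0" "\<forall>x. \<phi> x \<ge> l_phi"
  shows "\<exists>V V' V''.
           (\<forall>x. (V has_real_derivative V' x) (at x)) \<and>
           (\<forall>x. (V' has_real_derivative V'' x) (at x)) \<and>
           (\<forall>x. b x * V' x + (\<sigma> x)\<^sup>2 / 2 * V'' x - r * V x + f x
                 - lam * exp (- (\<phi> x - V x) / lam) = 0) \<and>
           (\<forall>\<alpha>. 0 < \<alpha> \<and> \<alpha> < 1 \<longrightarrow> C2_alpha_loc \<alpha> V) \<and>
           linear_growth V"
proof -
  have "r > L"
    using r_lo zero_le_power2[of L] by linarith
  moreover have "\<forall>x. \<phi> x \<ge> 0"
    using phi_lb by (meson order_trans)
  ultimately interpret hjb_ode b \<sigma> f \<phi> L sigma0 Lf r lam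
    using L_pos lip_b_sigma sigma0 f_nonneg f0 f_lip lam_pos phi_lip by unfold_locales auto
  obtain V V' V'' where dV: "\<And>x. (V has_real_derivative V' x) (at x)"
    and dV': "\<And>x. (V' has_real_derivative V'' x) (at x)"
    and eq: "\<And>x. (\<sigma> x)\<^sup>2 / 2 * V'' x + b x * V' x = H x (V x)"
    and bound: "\<And>x. \<bar>V x\<bar> \<le> barrier x"
    using whole_line_solution by blast
  show ?thesis
  proof (intro exI conjI allI impI)
    show "(V has_real_derivative V' x) (at x)" "(V' has_real_derivative V'' x) (at x)" for x
      by (rule dV dV')+
    show "b x * V' x + (\<sigma> x)\<^sup>2 / 2 * V'' x - r * V x + f x - lam * exp (- (\<phi> x - V x) / lam) = 0" for x
      using eq[of x] unfolding H_def by (simp add: algebra_simps)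
    show "C2_alpha_loc \<alpha> V" if "0 < \<alpha> \<and> \<alpha> < 1" for \<alpha>
      using that by (intro solution_C2_alpha_loc[OF dV dV' eq]) auto
    show "linear_growth V"
      by (rule linear_growth_of_barrier_bound[OF bound])
  qed
qed

end
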